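(* Let $H$ be a definite Hamiltonian on $(a,b)$ in the limit circle case. Further, let $c>0$, set $r_0 := \bigl(\frac{c}{\det\Omega(a,b)}\bigr)^{\frac 12}$, let $(\hat t,\hat s)$ be the unique compatible pair for $H,r_0$ with constants $c,c$, and let $K_H(t;r)$ be the corresponding kernel. Then \[ \frac{\int_a^b\sqrt{\det H(t)}\,\mathrm{d}t}{\sqrt{c}}\log 2\cdot r-\Bigl(\log r+\log\frac{2\operatorname{tr}\Omega(a,b)}{\sqrt{c}}\Bigr) \le \int_{\hat t(r)}^b K_H(t;r)\,\mathrm{d}t \le \frac{4\sqrt{\det\Omega(a,b)}}{\sqrt{c}}\cdot r \] for $r>r_0$.
   Context: Let $-\infty<a<b\le\infty$. A Hamiltonian on $(a,b)$ is a measurable $H:(a,b)\to\mathbb{R}^{2\times 2}$, locally integrable on $(a,c)$ for $c<b$, with $H(t)\ge0$ a.e. and $\{H=0\}$ null; $H=\begin{pmatrix}h_1&h_3\\ h_3&h_2\end{pmatrix}$. It is in the limit circle case if $\int_a^b\operatorname{tr}H<\infty$, and definite if there is no $\phi$ with $H(t)=\operatorname{tr}H(t)\,\xi_\phi\xi_\phi^T$ a.e. on $(a,b)$, $\xi_\phi=(\cos\phi,\sin\phi)^T$. Set $\Omega(s,t)=\int_s^tH(u)\,\mathrm{d}u$, $\omega_j(s,t)=\int_s^th_j$. The unique compatible pair $(\hat t,\hat s)$ for $H,r_0$ with constants $c,c$ is given by $\det\Omega(a,\hat t(r))=\frac{c}{r^2}$ for $r>r_0$ and, for $t\ge\hat t(r)$,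 $\hat s(t;r)\le t$ with $\det\Omega(\hat s(t;r),t)=\frac{c}{r^2}$. Kernel: $K_H(t;r):=\mathbf{1}_{[a,\hat t(r))}(t)\frac{\omega_2(a,t)h_1(t)}{\frac{c}{r^2}+(\omega_3(a,t))^2}+\mathbf{1}_{[\hat t(r),b)}(t)\frac{h_1(t)}{\omega_1(\hat s(t;r),t)}$; in particular $K_H(t;r)=\frac{h_1(t)}{\omega_1(\hat s(t;r),t)}$ for $t\ge\hat t(r)$. *)

theory Defs
  imports "HOL-Analysis.Analysis"
begin

text \<open>The interval (a,b) with a real and b possibly infinite (b :: ereal).
  A Hamiltonian H = ((h1,h3),(h3,h2)) is given by its three entry functions.\<close>

definition ival :: "real \<Rightarrow> ereal \<Rightarrow> real set" where
  "ival a b = {t. a < t \<and> ereal t < b}"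

definition hamiltonian ::
  "real \<Rightarrow> ereal \<Rightarrow> (real \<Rightarrow> real) \<Rightarrow> (real \<Rightarrow> real) \<Rightarrow> (real \<Rightarrow> real) \<Rightarrow> bool" where
  "hamiltonian a b h1 h2 h3 \<longleftrightarrow>
     ereal a < b \<and>
     (\<forall>h\<in>{h1,h2,h3}. set_borel_measurable lborel (ival a b) h) \<and>
     (\<forall>c. a < c \<and> ereal c < b \<longrightarrow>
        (\<forall>h\<in>{h1,h2,h3}. set_integrable lborel {a<..<c} h)) \<and>
     (AE t in lborel. t \<in> ival a b \<longrightarrow>
        h1 t \<ge> 0 \<and> h2 t \<ge> 0 \<and> h1 t * h2 t - (h3 t)\<^sup>2 \<ge> 0) \<and>
     (AE t in lborel. t \<in> ival a b \<longrightarrow> \<not> (h1 t = 0 \<and> h2 t = 0 \<and> h3 t = 0))"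

definition limit_circle ::
  "real \<Rightarrow> ereal \<Rightarrow> (real \<Rightarrow> real) \<Rightarrow> (real \<Rightarrow> real) \<Rightarrow> bool" where
  "limit_circle a b h1 h2 \<longleftrightarrow> set_integrable lborel (ival a b) (\<lambda>t. h1 t + h2 t)"

definition definite ::
  "real \<Rightarrow> ereal \<Rightarrow> (real \<Rightarrow> real) \<Rightarrow> (real \<Rightarrow> real) \<Rightarrow> (real \<Rightarrow> real) \<Rightarrow> bool" where
  "definite a b h1 h2 h3 \<longleftrightarrow>
     \<not> (\<exists>\<phi>::real. AE t in lborel. t \<in> ival a b \<longrightarrow>
          h1 t = (h1 t + h2 t) * (cos \<phi>)\<^sup>2 \<and>
          h3 t = (h1 t + h2 t) * (cos \<phi> * sin \<phi>) \<and>
          h2 t = (h1 t + h2 t) * (sin \<phi>)\<^sup>2)"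

text \<open>\<omega>_j over a set S (S = [s,t] gives \<omega>_j(s,t), S = (a,b) gives \<omega>_j(a,b)).\<close>
definition omg :: "(real \<Rightarrow> real) \<Rightarrow> real set \<Rightarrow> real" where
  "omg h S = (LINT u:S|lborel. h u)"

definition detOmega ::
  "(real \<Rightarrow> real) \<Rightarrow> (real \<Rightarrow> real) \<Rightarrow> (real \<Rightarrow> real) \<Rightarrow> real set \<Rightarrow> real" where
  "detOmega h1 h2 h3 S = omg h1 S * omg h2 S - (omg h3 S)\<^sup>2"

definition trOmega :: "(real \<Rightarrow> real) \<Rightarrow> (real \<Rightarrow> real) \<Rightarrow> real set \<Rightarrow> real" where
  "trOmega h1 h2 S = omg h1 S + omg h2 S"

definition kernelH ::
  "real \<Rightarrow> ereal \<Rightarrow> (real \<Rightarrow> real) \<Rightarrow> (real \<Rightarrow> real) \<Rightarrow> (real \<Rightarrow> real) \<Rightarrow> real \<Rightarrow>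
   (real \<Rightarrow> real) \<Rightarrow> (real \<Rightarrow> real \<Rightarrow> real) \<Rightarrow> real \<Rightarrow> real \<Rightarrow> real" where
  "kernelH a b h1 h2 h3 c that shat t r =
     (if a \<le> t \<and> t < that r then
        omg h2 {a..t} * h1 t / (c / r\<^sup>2 + (omg h3 {a..t})\<^sup>2)
      else if that r \<le> t \<and> ereal t < b then
        h1 t / omg h1 {shat t r..t}
      else 0)"

end

theory Submission
  imports Defs "HOL-Probability.Probability_Mass_Function"
begin

(* Put delta = c / r^2 and choose points a = p_0 < p_1 = t-hat(r) < ... < p_n such that
   det Omega = delta on every link [p_i, p_(i+1)) and det Omega <= delta on [p_n, b).  The set
   function sqrt (det Omega) is superadditive (a Minkowski inequality for positive semidefinite
   2 by 2 matrices), hence n <= sqrt (det Omega(a, b) / delta), and the same inequality, integrated,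
   gives int sqrt (det H) <= (n + 1) sqrt delta.
   For t in a link [p_k, p_(k+1)) the point s-hat(t) lies in [p_(k-1), p_k].
   Lower bound: omega_1(s-hat(t), t) <= omega_1(p_(k-1), p_k) + omega_1(p_k, t), so K_H integrates
   over the link to at least the logarithm of a ratio of consecutive link masses
   omega_1(p_i, p_(i+1)); by AM-GM each link contributes ln 2 up to a telescoping term.
   Upper bound: by monotonicity of the Schur complement det Omega / omega_1, the mass
   omega_1(s-hat(t), t) is at least max (omega_1(p_k, t), delta omega_1(B) / det Omega(B)) for the
   block B = [p_(k-1), p_(k+2)), which bounds the integral over the link by
   2 sqrt (det Omega(B) / delta); blocks with indices of equal parity are disjoint, so
   superadditivity sums these bounds to 4 sqrt (det Omega(a, b) / delta). *)

section \<open>Elementary inequalities\<close>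

text \<open>The triple (p1, p2, p3) stands for the symmetric matrix ((p1, p3), (p3, p2)).\<close>

definition psd2 :: "real \<Rightarrow> real \<Rightarrow> real \<Rightarrow> bool" where
  "psd2 p1 p2 p3 \<longleftrightarrow> 0 \<le> p1 \<and> 0 \<le> p2 \<and> p3\<^sup>2 \<le> p1 * p2"

lemma psd2_quadratic_form_nonneg:
  assumes "psd2 p1 p2 p3"
  shows "0 \<le> p1 * u\<^sup>2 + 2 * p3 * u * v + p2 * v\<^sup>2"
proof (cases "p1 = 0")
  case True
  then show ?thesis using assms by (simp add: psd2_def)
next
  case False
  then have "p1 > 0" using assms by (simp add: psd2_def)
  have "p1 * (p1 * u\<^sup>2 + 2 * p3 * u * v + p2 * v\<^sup>2) = (p1 * u + p3 * v)\<^sup>2 + (p1 * p2 - p3\<^sup>2) * v\<^sup>2"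
    by (simp add: algebra_simps power2_eq_square)
  also have "\<dots> \<ge> 0" using assms by (simp add: psd2_def)
  finally show ?thesis using \<open>p1 > 0\<close> by (simp add: zero_le_mult_iff)
qed

lemma psd2_if_quadratic_form_nonneg:
  assumes "0 \<le> p1" "0 \<le> p2" and form: "\<And>u. 0 \<le> p1 * u\<^sup>2 + 2 * p3 * u + p2"
  shows "psd2 p1 p2 p3"
proof (cases "p1 = 0")
  case True
  have "p3 = 0"
  proof (rule ccontr)
    assume "p3 \<noteq> 0"
    then show False using form[of "-(p2 + 1) / (2 * p3)"] True by (simp add: field_simps)
  qed
  then show ?thesis using assms by (simp add: psd2_def)
next
  case False
  then have "p1 > 0" using assms by simp
  have "0 \<le> p1 * (-p3/p1)\<^sup>2 + 2 * p3 * (-p3/p1) + p2" by (rule form)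
  also have "\<dots> = p2 - p3\<^sup>2/p1" using \<open>p1 > 0\<close> by (simp add: field_simps power2_eq_square)
  finally show ?thesis using assms \<open>p1 > 0\<close> by (simp add: psd2_def field_simps)
qed

text \<open>The bilinear form underlying det (P + Q) = det P + det Q + (p1 q2 + p2 q1 - 2 p3 q3).\<close>

lemma psd2_mixed_term_ge:
  assumes P: "psd2 p1 p2 p3" and Q: "psd2 q1 q2 q3"
  shows "2 * sqrt ((p1 * p2 - p3\<^sup>2) * (q1 * q2 - q3\<^sup>2)) \<le> p1 * q2 + p2 * q1 - 2 * p3 * q3"
proof (cases "p1 = 0 \<or> q1 = 0")
  case True
  then have "p3 = 0 \<or> q3 = 0" using P Q by (auto simp: psd2_def)
  then show ?thesis using True P Q by (auto simp: psd2_def)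
next
  case False
  then have "p1 > 0" "q1 > 0" using P Q by (auto simp: psd2_def)
  define dP dQ where "dP = p1 * p2 - p3\<^sup>2" and "dQ = q1 * q2 - q3\<^sup>2"
  have "dP \<ge> 0" "dQ \<ge> 0" using P Q by (auto simp: psd2_def dP_def dQ_def)
  have "p1 * q1 * (2 * sqrt (dP * dQ)) \<le> p1\<^sup>2 * dQ + q1\<^sup>2 * dP"
    using zero_le_power2[of "p1 * sqrt dQ - q1 * sqrt dP"] \<open>dP \<ge> 0\<close> \<open>dQ \<ge> 0\<close>
    by (simp add: power2_eq_square algebra_simps real_sqrt_mult)
  also have "\<dots> \<le> (p3 * q1 - p1 * q3)\<^sup>2 + p1\<^sup>2 * dQ + q1\<^sup>2 * dP" by simp
  also have "\<dots> = p1 * q1 * (p1 * q2 + p2 * q1 - 2 * p3 * q3)"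
    by (simp add: dP_def dQ_def power2_eq_square algebra_simps)
  finally show ?thesis using \<open>p1 > 0\<close> \<open>q1 > 0\<close> by (simp add: dP_def dQ_def mult_le_cancel_left_pos)
qed

lemma psd2_mixed_term_pos:
  assumes P: "0 \<le> p1" "0 \<le> p2" "p3\<^sup>2 < p1 * p2" and Q: "psd2 q1 q2 q3" "0 < q1 + q2"
  shows "0 < p1 * q2 + p2 * q1 - 2 * p3 * q3"
proof -
  have "p1 > 0" "p2 > 0" using P by (auto simp: less_le)
  show ?thesis
  proof (cases "q1 = 0")
    case True
    then show ?thesis using Q \<open>p1 > 0\<close> by (simp add: psd2_def)
  next
    case False
    then have "q1 > 0" using Q by (simp add: psd2_def)
    have "0 < (p3 * q1 - p1 * q3)\<^sup>2 + p1\<^sup>2 * (q1 * q2 - q3\<^sup>2) + q1\<^sup>2 * (p1 * p2 - p3\<^sup>2)"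
      using P Q \<open>q1 > 0\<close> by (simp add: psd2_def add_nonneg_pos)
    also have "\<dots> = p1 * q1 * (p1 * q2 + p2 * q1 - 2 * p3 * q3)"
      by (simp add: power2_eq_square algebra_simps)
    finally show ?thesis by (rule zero_less_mult_pos) (use \<open>p1 > 0\<close> \<open>q1 > 0\<close> in simp)
  qed
qed

text \<open>Adding a positive semidefinite matrix does not decrease det X / x1.\<close>

lemma psd2_det_add_ge:
  assumes "psd2 y1 y2 y3" "0 \<le> x1"
  shows "(x1 + y1) * (x1 * x2 - x3\<^sup>2) \<le> x1 * ((x1 + y1) * (x2 + y2) - (x3 + y3)\<^sup>2)"
proof -
  have "x1 * ((x1 + y1) * (x2 + y2) - (x3 + y3)\<^sup>2) - (x1 + y1) * (x1 * x2 - x3\<^sup>2)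
      = (y1 * x3\<^sup>2 + 2 * y3 * x3 * (-x1) + y2 * (-x1)\<^sup>2) + x1 * (y1 * y2 - y3\<^sup>2)"
    by (simp add: algebra_simps power2_eq_square)
  moreover have "0 \<le> y1 * x3\<^sup>2 + 2 * y3 * x3 * (-x1) + y2 * (-x1)\<^sup>2"
    by (rule psd2_quadratic_form_nonneg[OF assms(1)])
  moreover have "0 \<le> x1 * (y1 * y2 - y3\<^sup>2)" using assms by (simp add: psd2_def)
  ultimately show ?thesis by linarith
qed

lemma psd2_abs_le_trace:
  assumes "psd2 p1 p2 p3"
  shows "\<bar>p1\<bar> \<le> p1 + p2" "\<bar>p2\<bar> \<le> p1 + p2" "\<bar>p3\<bar> \<le> p1 + p2"
proof -
  have "0 \<le> p1" "0 \<le> p2" "p3\<^sup>2 \<le> p1 * p2" using assms by (simp_all add: psd2_def)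
  then show "\<bar>p1\<bar> \<le> p1 + p2" "\<bar>p2\<bar> \<le> p1 + p2" by simp_all
  have "p1 * p2 \<le> (p1 + p2)\<^sup>2"
    using mult_nonneg_nonneg[OF \<open>0 \<le> p1\<close> \<open>0 \<le> p2\<close>] zero_le_power2[of p1] zero_le_power2[of p2]
    unfolding power2_sum by linarith
  then have "p3\<^sup>2 \<le> (p1 + p2)\<^sup>2" using \<open>p3\<^sup>2 \<le> p1 * p2\<close> by linarith
  then show "\<bar>p3\<bar> \<le> p1 + p2" using \<open>0 \<le> p1\<close> \<open>0 \<le> p2\<close> by (simp add: abs_le_square_iff[symmetric])
qed

lemma ln_two_add_half_ln_ratio_le:
  fixes x y :: real
  assumes "0 < x" "0 < y"
  shows "ln 2 + (ln y - ln x) / 2 \<le> ln ((x + y) / x)"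
proof -
  have "2 * sqrt (y / x) \<le> 1 + y / x"
    using zero_le_power2[of "sqrt (y / x) - 1"] assms by (simp add: power2_eq_square algebra_simps)
  also have "\<dots> = (x + y) / x" using assms by (simp add: field_simps)
  finally have "ln (2 * sqrt (y / x)) \<le> ln ((x + y) / x)" using assms by simp
  moreover have "ln (2 * sqrt (y / x)) = ln 2 + (ln y - ln x) / 2"
    using assms by (simp add: ln_mult ln_sqrt ln_div)
  ultimately show ?thesis by simp
qed

lemma ln_add_ln_le_ln_half_sum:
  fixes x y :: real
  assumes "0 < x" "0 < y"
  shows "ln x + ln y \<le> 2 * ln ((x + y) / 2)"
proof -
  have "x * y \<le> ((x + y) / 2)\<^sup>2"
    using zero_le_power2[of "x - y"] by (simp add: power2_eq_square field_simps)
  then have "ln (x * y) \<le> ln (((x + y) / 2)\<^sup>2)" using assms by simp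
  then show ?thesis using assms by (simp add: ln_mult ln_realpow)
qed

lemma max_one_div_le:
  fixes \<delta> D w F :: real
  assumes "0 < \<delta>" "\<delta> \<le> D" "0 < w" "F \<le> w"
  shows "max 1 (F / (\<delta> * w / D)) \<le> D / \<delta>"
proof -
  have "F / (\<delta> * w / D) \<le> w * D / (\<delta> * w)"
    using assms by (simp add: field_simps mult_right_mono)
  then show ?thesis using assms by simp
qed

section \<open>Integrals over subsets of the real line\<close>

lemma set_integrable_of_integrable:
  "integrable lborel (g :: real \<Rightarrow> real) \<Longrightarrow> A \<in> sets borel \<Longrightarrow> set_integrable lborel A g"
  unfolding set_integrable_def by (intro integrable_mult_indicator) auto

lemma set_integral_eq_off_finite:
  fixes f g :: "real \<Rightarrow> real"
  assumes "finite X" "\<And>x. x \<notin> X \<Longrightarrow> indicator A x * f x = indicator B x * g x"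
  shows "(LINT x:A|lborel. f x) = (LINT x:B|lborel. g x)"
  unfolding set_lebesgue_integral_def
  by (rule integral_discrete_difference[where X=X]) (use assms in \<open>auto intro: countable_finite\<close>)

lemma set_integral_Ico_split:
  fixes g :: "real \<Rightarrow> real"
  assumes "set_integrable lborel {x..<z} g" "x \<le> y" "y \<le> z"
  shows "(LINT u:{x..<z}|lborel. g u) = (LINT u:{x..<y}|lborel. g u) + (LINT u:{y..<z}|lborel. g u)"
proof -
  have "{x..<z} = {x..<y} \<union> {y..<z}" using assms by auto
  moreover have "set_integrable lborel {x..<y} g" "set_integrable lborel {y..<z} g"
    using assms by (auto intro: set_integrable_subset)
  ultimately show ?thesis by (simp add: set_integral_Un ivl_disj_int_two(3))
qed

lemma omg_empty[simp]: "omg g {} = 0"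
  by (simp add: omg_def set_lebesgue_integral_def)

lemma detOmega_empty[simp]: "detOmega g1 g2 g3 {} = 0"
  by (simp add: detOmega_def)

lemma omg_Un:
  assumes "integrable lborel g" "A \<in> sets borel" "B \<in> sets borel" "A \<inter> B = {}"
  shows "omg g (A \<union> B) = omg g A + omg g B"
  unfolding omg_def by (rule set_integral_Un) (use assms in \<open>auto intro: set_integrable_of_integrable\<close>)

lemma omg_nonneg:
  assumes "AE x in lborel. 0 \<le> g x"
  shows "0 \<le> omg g A"
  unfolding omg_def set_lebesgue_integral_def
  by (intro integral_nonneg_AE) (use assms in \<open>auto split: split_indicator\<close>)

lemma omg_mono:
  assumes "integrable lborel g" "AE x in lborel. 0 \<le> g x" "A \<in> sets borel" "B \<in> sets borel" "A \<subseteq> B"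
  shows "omg g A \<le> omg g B"
proof -
  have "omg g B = omg g A + omg g (B - A)"
    using omg_Un[of g A "B - A"] assms by (simp add: Un_absorb1)
  then show ?thesis using omg_nonneg[OF assms(2)] by simp
qed

lemma omg_Ico_split:
  "integrable lborel g \<Longrightarrow> x \<le> y \<Longrightarrow> y \<le> z \<Longrightarrow> omg g {x..<z} = omg g {x..<y} + omg g {y..<z}"
  unfolding omg_def by (intro set_integral_Ico_split set_integrable_of_integrable) auto

lemma omg_Ico_pos:
  assumes "integrable lborel g" "AE x in lborel. 0 \<le> g x"
    and "AE x in lborel. x \<in> {s<..<t} \<longrightarrow> 0 < g x" "s < t"
  shows "0 < omg g {s..<t}"
proof -
  have "omg g {s..<t} \<noteq> 0"
  proof
    assume "omg g {s..<t} = 0"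
    moreover have "integrable lborel (\<lambda>x. indicator {s..<t} x * g x)"
      using set_integrable_of_integrable[OF assms(1), of "{s..<t}"] by (simp add: set_integrable_def)
    moreover have "AE x in lborel. 0 \<le> indicator {s..<t} x * g x"
      using assms(2) by (auto split: split_indicator elim: eventually_mono)
    ultimately have "AE x in lborel. indicator {s..<t} x * g x = 0"
      by (simp add: omg_def set_lebesgue_integral_def integral_nonneg_eq_0_iff_AE)
    then have "AE x in lborel. x \<notin> {s<..<t}"
      using assms(3) by eventually_elim (auto simp: indicator_def)
    then have "{s<..<t} \<in> null_sets lborel" by (subst AE_iff_null_sets) auto
    then have "emeasure lborel {s<..<t} = 0" by auto
    then show False using assms(4) by simp
  qed
  then show ?thesis using omg_nonneg[OF assms(2), of "{s..<t}"] by simp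
qed

lemma continuous_on_omg_Ico:
  assumes "integrable lborel g"
  shows "continuous_on {x..} (\<lambda>y. omg g {x..<y})"
proof -
  have "continuous_on UNIV (\<lambda>y. LBINT u:{x..y}. g u)"
    by (intro continuous_on_LBINT set_integrable_of_integrable assms) auto
  moreover have "omg g {x..<y} = (LBINT u:{x..y}. g u)" for y
    unfolding omg_def by (rule set_integral_eq_off_finite[where X="{y}"]) (auto split: split_indicator)
  ultimately show ?thesis by (auto intro: continuous_on_subset)
qed

lemma tendsto_omg_Ico_at_top:
  assumes "integrable lborel g"
  shows "((\<lambda>y. omg g {x..<y}) \<longlongrightarrow> omg g {x..}) at_top"
proof -
  have "integrable lborel (\<lambda>u. indicator {x..} u *\<^sub>R g u)"
    using set_integrable_of_integrable[OF assms, of "{x..}"] by (simp add: set_integrable_def)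
  then have "((\<lambda>y. \<integral>u. indicator {..y} u *\<^sub>R (indicator {x..} u *\<^sub>R g u) \<partial>lborel) \<longlongrightarrow>
        \<integral>u. indicator {x..} u *\<^sub>R g u \<partial>lborel) at_top"
    by (intro tendsto_integral_at_top) simp_all
  moreover have "(\<integral>u. indicator {..y} u *\<^sub>R (indicator {x..} u *\<^sub>R g u) \<partial>lborel) = omg g {x..<y}" for y
    unfolding omg_def set_lebesgue_integral_def
    by (rule integral_discrete_difference[where X="{y}"]) (auto split: split_indicator)
  ultimately show ?thesis unfolding omg_def set_lebesgue_integral_def by simp
qed

section \<open>Integrals of f / h for a nonnegative integrable f\<close>

locale nonneg_integrable =
  fixes f :: "real \<Rightarrow> real"
  assumes integrable: "integrable lborel f"
    and nonneg: "AE x in lborel. 0 \<le> f x"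
begin

lemma measurable[measurable]: "f \<in> borel_measurable borel"
  using borel_measurable_integrable[OF integrable] by simp

definition F :: "real \<Rightarrow> real \<Rightarrow> real" where
  "F x y = omg f {x..<y}"

lemma F_nonneg: "0 \<le> F x y"
  unfolding F_def by (rule omg_nonneg[OF nonneg])

lemma F_split: "x \<le> y \<Longrightarrow> y \<le> z \<Longrightarrow> F x z = F x y + F y z"
  unfolding F_def by (rule omg_Ico_split[OF integrable])

lemma F_mono: "y \<le> y' \<Longrightarrow> F x y \<le> F x y'"
  unfolding F_def by (rule omg_mono[OF integrable nonneg]) auto

lemma F_self[simp]: "F x x = 0"
  by (simp add: F_def)

lemma F_measurable[measurable]: "F x \<in> borel_measurable borel"
  by (rule borel_measurable_mono) (auto simp: mono_def F_mono)

lemma F_attains: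
  assumes "x \<le> z" "z \<le> y" "F x z \<le> v" "v \<le> F x y"
  obtains w where "z \<le> w" "w \<le> y" "F x w = v"
proof -
  have "continuous_on {x..} (F x)"
    using continuous_on_omg_Ico[OF integrable] by (simp add: F_def[abs_def])
  then have "continuous_on {z..y} (F x)"
    by (rule continuous_on_subset) (use assms in auto)
  then show ?thesis using IVT'[of "F x" z v y] assms that by auto
qed

lemma set_integrable_div:
  assumes "A \<in> sets borel" "h \<in> borel_measurable borel" "0 < C" "\<And>u. u \<in> A \<Longrightarrow> C \<le> h u"
  shows "set_integrable lborel A (\<lambda>u. f u / h u)"
proof (rule set_integrable_bound[where f="\<lambda>u. f u / C"])
  show "set_integrable lborel A (\<lambda>u. f u / C)"
    using set_integrable_of_integrable[OF integrable assms(1)]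
    by (simp add: set_integrable_def)
  show "set_borel_measurable lborel A (\<lambda>u. f u / h u)"
    unfolding set_borel_measurable_def using assms by measurable
  show "AE u in lborel. u \<in> A \<longrightarrow> norm (f u / h u) \<le> norm (f u / C)"
    using assms by (intro AE_I2 impI) (force intro: divide_left_mono)
qed

lemma integral_div_le:
  assumes "A \<in> sets borel" "h \<in> borel_measurable borel" "0 < C" "\<And>u. u \<in> A \<Longrightarrow> C \<le> h u"
  shows "(LINT u:A|lborel. f u / h u) \<le> omg f A / C"
proof -
  have "(LINT u:A|lborel. f u / h u) \<le> (LINT u:A|lborel. f u / C)"
  proof (rule set_integral_mono_AE)
    show "set_integrable lborel A (\<lambda>u. f u / h u)" by (rule set_integrable_div[OF assms])
    show "set_integrable lborel A (\<lambda>u. f u / C)"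
      using set_integrable_of_integrable[OF integrable assms(1)]
      by (simp add: set_integrable_def)
    show "AE u\<in>A in lborel. f u / h u \<le> f u / C"
      using nonneg
      by eventually_elim (use assms in \<open>auto intro!: divide_left_mono mult_pos_pos intro: less_le_trans[of 0 C]\<close>)
  qed
  then show ?thesis unfolding omg_def by simp
qed

lemma integral_div_ge:
  assumes "A \<in> sets borel" "set_integrable lborel A (\<lambda>u. f u / h u)"
    and "\<And>u. u \<in> A \<Longrightarrow> 0 < h u \<and> h u \<le> C"
  shows "omg f A / C \<le> (LINT u:A|lborel. f u / h u)"
proof -
  have "(LINT u:A|lborel. f u / C) \<le> (LINT u:A|lborel. f u / h u)"
  proof (rule set_integral_mono_AE)
    show "set_integrable lborel A (\<lambda>u. f u / C)"
      using set_integrable_of_integrable[OF integrable assms(1)]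
      by (simp add: set_integrable_def)
    show "AE u\<in>A in lborel. f u / C \<le> f u / h u"
      using nonneg
    proof eventually_elim
      case (elim u)
      show ?case
      proof
        assume "u \<in> A"
        then have "0 < h u" "h u \<le> C" using assms(3) by auto
        then show "f u / C \<le> f u / h u" using elim by (intro divide_left_mono) auto
      qed
    qed
  qed fact
  then show ?thesis unfolding omg_def by simp
qed

text \<open>Cut [x, y) at the points where c + F x \<cdot> runs through c, c q, ..., c q^k; on each piece
  f / (c + F x \<cdot>) integrates to at least 1 - 1/q.\<close>

lemma integral_div_shifted_ge_geometric:
  assumes c: "0 < c" and q: "1 \<le> q"
  shows "x \<le> y \<Longrightarrow> c + F x y = c * q ^ k \<Longrightarrow>
    real k * (1 - 1 / q) \<le> (LINT u:{x..<y}|lborel. f u / (c + F x u))"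
proof (induction k arbitrary: y)
  case 0
  have "0 \<le> (LINT u:{x..<y}|lborel. f u / (c + F x u))"
    unfolding set_lebesgue_integral_def
    by (intro integral_nonneg_AE)
      (use nonneg F_nonneg c in \<open>auto split: split_indicator elim!: eventually_mono\<close>)
  then show ?case by simp
next
  case (Suc k)
  have q_k: "c \<le> c * q ^ k" "c * q ^ k \<le> c * q ^ Suc k" using c q by simp_all
  obtain w where w: "x \<le> w" "w \<le> y" "F x w = c * q ^ k - c"
    by (rule F_attains[of x x y "c * q ^ k - c"]) (use Suc.prems q_k in auto)
  have int: "set_integrable lborel {x..<y} (\<lambda>u. f u / (c + F x u))"
    by (rule set_integrable_div[OF _ _ c]) (auto simp: F_nonneg)
  have "real k * (1 - 1 / q) \<le> (LINT u:{x..<w}|lborel. f u / (c + F x u))"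
    by (rule Suc.IH) (use w in auto)
  moreover have "1 - 1 / q \<le> (LINT u:{w..<y}|lborel. f u / (c + F x u))"
  proof -
    have F_wy: "omg f {w..<y} = c * q ^ k * (q - 1)"
      using F_split[of x w y] w Suc.prems by (simp add: F_def algebra_simps)
    have "1 - 1 / q = omg f {w..<y} / (c * q ^ Suc k)"
      unfolding F_wy using c q by (simp add: field_simps)
    also have "\<dots> \<le> (LINT u:{w..<y}|lborel. f u / (c + F x u))"
    proof (rule integral_div_ge)
      show "set_integrable lborel {w..<y} (\<lambda>u. f u / (c + F x u))"
        using int by (rule set_integrable_subset) (use w in auto)
      show "0 < c + F x u \<and> c + F x u \<le> c * q ^ Suc k" if "u \<in> {w..<y}" for u
        using F_mono[of u y x] that c F_nonneg[of x u] Suc.prems by auto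
    qed simp
    finally show ?thesis .
  qed
  ultimately show ?case
    using set_integral_Ico_split[OF int w(1,2)] by (simp add: algebra_simps)
qed

text \<open>Use N pieces with ratio q = exp (L / N), note N (1 - 1/q) \<ge> L / q and let N tend to infinity.\<close>

lemma ln_le_integral_div_shifted:
  assumes "0 < c" "x \<le> y"
  shows "ln ((c + F x y) / c) \<le> (LINT u:{x..<y}|lborel. f u / (c + F x u))"
proof -
  define L where "L = ln ((c + F x y) / c)"
  have "L \<ge> 0" using assms F_nonneg[of x y] by (simp add: L_def)
  have "L / exp (L / real N) \<le> (LINT u:{x..<y}|lborel. f u / (c + F x u))" if "N \<ge> 1" for N
  proof -
    define q where "q = exp (L / real N)"
    have "1 \<le> q" using \<open>L \<ge> 0\<close> by (simp add: q_def)
    have "q ^ N = exp L" using that by (simp add: q_def flip: exp_of_nat_mult)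
    then have "c + F x y = c * q ^ N" using assms F_nonneg[of x y] by (simp add: L_def)
    have "ln q / q \<le> 1 - 1 / q"
      using ln_le_minus_one[of q] \<open>1 \<le> q\<close> by (simp add: field_simps)
    then have "real N * (ln q / q) \<le> real N * (1 - 1 / q)" by (rule mult_left_mono) simp
    moreover have "real N * (ln q / q) = L / q" using that by (simp add: q_def)
    ultimately have "L / q \<le> real N * (1 - 1 / q)" by linarith
    also have "\<dots> \<le> (LINT u:{x..<y}|lborel. f u / (c + F x u))"
      by (rule integral_div_shifted_ge_geometric) fact+
    finally show ?thesis by (simp add: q_def)
  qed
  moreover have "((\<lambda>N. L / exp (L * inverse (real N))) \<longlongrightarrow> L / exp (L * 0)) sequentially"
    by (intro tendsto_intros lim_inverse_n) simp
  ultimately show ?thesis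
    unfolding L_def[symmetric]
    by (intro tendsto_upperbound[where F=sequentially])
      (auto simp: divide_inverse eventually_sequentially)
qed

text \<open>Cut [x, y) where F x \<cdot> reaches m and sqrt (m F x y); the three pieces contribute at most
  1, sqrt (F x y / m) - 1 and sqrt (F x y / m) - 1.\<close>

lemma integral_div_max_le_sqrt:
  assumes "0 < m" "x \<le> y"
  shows "(LINT u:{x..<y}|lborel. f u / max (F x u) m) \<le> 2 * sqrt (max 1 (F x y / m))"
proof (cases "F x y \<le> m")
  case True
  have "(LINT u:{x..<y}|lborel. f u / max (F x u) m) \<le> omg f {x..<y} / m"
    by (rule integral_div_le) (use assms in auto)
  also have "\<dots> \<le> 1" using True assms by (simp add: F_def)
  finally have "(LINT u:{x..<y}|lborel. f u / max (F x u) m) \<le> 1" .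
  moreover have "1 \<le> sqrt (max 1 (F x y / m))" by simp
  ultimately show ?thesis by linarith
next
  case False
  define X r where "X = F x y" and "r = sqrt (X / m)"
  define s where "s = r * m"
  have "1 < r" using False assms by (simp add: X_def r_def)
  have "r * r = X / m" using False assms by (simp add: r_def X_def flip: power2_eq_square)
  then have "X = r * s" using assms by (simp add: s_def field_simps)
  have "m \<le> s" "s \<le> X" using \<open>1 < r\<close> \<open>X = r * s\<close> assms by (simp_all add: s_def)
  obtain w1 where w1: "x \<le> w1" "w1 \<le> y" "F x w1 = m"
    by (rule F_attains[of x x y m]) (use assms False in auto)
  obtain w2 where w2: "w1 \<le> w2" "w2 \<le> y" "F x w2 = s"
    by (rule F_attains[of x w1 y s]) (use w1 \<open>m \<le> s\<close> \<open>s \<le> X\<close> X_def in auto)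
  define G where "G u = f u / max (F x u) m" for u
  have int: "set_integrable lborel {x..<y} G"
    unfolding G_def by (rule set_integrable_div) (use assms in auto)
  have "(LINT u:{x..<w1}|lborel. G u) \<le> omg f {x..<w1} / m"
    unfolding G_def by (rule integral_div_le) (use assms in auto)
  moreover have "(LINT u:{w1..<w2}|lborel. G u) \<le> omg f {w1..<w2} / m"
    unfolding G_def
    by (rule integral_div_le) (use assms w1 F_mono[of w1 _ x] in \<open>auto intro: max.coboundedI1\<close>)
  moreover have "(LINT u:{w2..<y}|lborel. G u) \<le> omg f {w2..<y} / s"
    unfolding G_def
    by (rule integral_div_le) (use assms \<open>m \<le> s\<close> w2 F_mono[of w2 _ x] in \<open>auto intro: max.coboundedI1\<close>)
  moreover have "omg f {w1..<w2} = s - m" "omg f {w2..<y} = X - s"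
    using F_split[of x w1 w2] F_split[of x w2 y] w1 w2 by (auto simp: X_def F_def)
  then have "omg f {w1..<w2} / m = r - 1" "omg f {w2..<y} / s = r - 1"
    using assms \<open>m \<le> s\<close> \<open>X = r * s\<close> by (simp_all add: s_def diff_divide_distrib)
  moreover have "omg f {x..<w1} / m = 1" using w1 assms by (simp add: F_def)
  moreover have "(LINT u:{x..<y}|lborel. G u) =
      (LINT u:{x..<w1}|lborel. G u) + (LINT u:{w1..<w2}|lborel. G u) + (LINT u:{w2..<y}|lborel. G u)"
    using set_integral_Ico_split[OF int w1(1) w1(2)]
      set_integral_Ico_split[OF set_integrable_subset[OF int] w2(1,2)] w1 w2 by auto
  ultimately have "(LINT u:{x..<y}|lborel. G u) \<le> 2 * r - 1" by linarith
  moreover have "sqrt (max 1 (F x y / m)) = r" using False assms by (simp add: r_def X_def)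
  ultimately show ?thesis by (simp add: G_def)
qed

lemma integral_Ici_div_max_le_sqrt:
  assumes "0 < m"
  shows "(LINT u:{x..}|lborel. f u / max (F x u) m) \<le> 2 * sqrt (max 1 (omg f {x..} / m))"
proof -
  define G where "G u = f u / max (F x u) m" for u
  have "integrable lborel G"
    using set_integrable_div[of UNIV "\<lambda>u. max (F x u) m" m] assms
    unfolding G_def set_integrable_def by simp
  then have "((\<lambda>y. omg G {x..<y}) \<longlongrightarrow> omg G {x..}) at_top"
    by (rule tendsto_omg_Ico_at_top)
  moreover have "eventually (\<lambda>y. omg G {x..<y} \<le> 2 * sqrt (max 1 (omg f {x..} / m))) at_top"
  proof (rule eventually_at_top_linorderI)
    fix y assume "x \<le> y"
    have "F x y \<le> omg f {x..}" unfolding F_def by (rule omg_mono[OF integrable nonneg]) auto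
    then have "sqrt (max 1 (F x y / m)) \<le> sqrt (max 1 (omg f {x..} / m))"
      by (intro real_sqrt_le_mono max.mono divide_right_mono) (use assms in auto)
    moreover have "omg G {x..<y} = (LINT u:{x..<y}|lborel. f u / max (F x u) m)"
      by (simp add: G_def omg_def)
    ultimately show "omg G {x..<y} \<le> 2 * sqrt (max 1 (omg f {x..} / m))"
      using integral_div_max_le_sqrt[OF assms \<open>x \<le> y\<close>] by linarith
  qed
  ultimately have "omg G {x..} \<le> 2 * sqrt (max 1 (omg f {x..} / m))"
    by (rule tendsto_upperbound) simp
  then show ?thesis by (simp add: G_def omg_def)
qed

end

section \<open>The matrix measure of an integrable positive semidefinite Hamiltonian\<close>

locale psd_hamiltonian =
  fixes g1 g2 g3 :: "real \<Rightarrow> real"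
  assumes integrable: "integrable lborel g1" "integrable lborel g2" "integrable lborel g3"
    and psd: "AE x in lborel. psd2 (g1 x) (g2 x) (g3 x)"
begin

abbreviation "w1 \<equiv> omg g1"
abbreviation "w2 \<equiv> omg g2"
abbreviation "w3 \<equiv> omg g3"
abbreviation "detO \<equiv> detOmega g1 g2 g3"

lemma measurable[measurable]:
  "g1 \<in> borel_measurable borel" "g2 \<in> borel_measurable borel" "g3 \<in> borel_measurable borel"
  using integrable by (simp_all add: borel_measurable_integrable)

lemma g1_nonneg: "AE x in lborel. 0 \<le> g1 x" and g2_nonneg: "AE x in lborel. 0 \<le> g2 x"
  using psd by (auto simp: psd2_def elim: eventually_mono)

lemma w1_nonneg: "0 \<le> w1 S" and w2_nonneg: "0 \<le> w2 S"
  by (simp_all add: omg_nonneg g1_nonneg g2_nonneg)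

lemma omg_lincomb:
  assumes "S \<in> sets borel"
  shows "omg (\<lambda>x. p * g1 x + q * g2 x + r * g3 x) S = p * w1 S + q * w2 S + r * w3 S"
proof -
  have "set_integrable lborel S (\<lambda>x. p * g1 x)" "set_integrable lborel S (\<lambda>x. q * g2 x)"
    "set_integrable lborel S (\<lambda>x. r * g3 x)"
    using integrable assms by (auto intro: set_integrable_of_integrable)
  then show ?thesis unfolding omg_def by simp
qed

lemma psd2_omg:
  assumes S: "S \<in> sets borel"
  shows "psd2 (w1 S) (w2 S) (w3 S)"
proof (rule psd2_if_quadratic_form_nonneg[OF w1_nonneg w2_nonneg])
  fix u :: real
  have "0 \<le> u\<^sup>2 * w1 S + 1 * w2 S + (2 * u) * w3 S"
    unfolding omg_lincomb[OF S, symmetric]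
    by (rule omg_nonneg)
      (use psd in \<open>auto elim!: eventually_mono dest: psd2_quadratic_form_nonneg[of _ _ _ u 1]
        simp: algebra_simps\<close>)
  then show "0 \<le> w1 S * u\<^sup>2 + 2 * w3 S * u + w2 S" by (simp add: algebra_simps)
qed

lemma detO_nonneg: "S \<in> sets borel \<Longrightarrow> 0 \<le> detO S"
  using psd2_omg unfolding detOmega_def psd2_def by simp

lemma w1_pos_if_detO_pos:
  assumes "0 < detO S"
  shows "0 < w1 S"
proof (rule ccontr)
  assume "\<not> 0 < w1 S"
  then have "w1 S = 0" using w1_nonneg[of S] by simp
  then show False using assms by (simp add: detOmega_def)
qed

lemma detO_le_w1_mult_w2_UNIV:
  assumes "S \<in> sets borel"
  shows "detO S \<le> w1 S * w2 UNIV"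
proof -
  have "w1 S * w2 S \<le> w1 S * w2 UNIV"
    using omg_mono[OF integrable(2) g2_nonneg, of S UNIV] assms w1_nonneg[of S]
    by (simp add: mult_left_mono)
  then show ?thesis unfolding detOmega_def using zero_le_power2[of "w3 S"] by linarith
qed

lemma detO_Un:
  assumes "S \<in> sets borel" "T \<in> sets borel" "S \<inter> T = {}"
  shows "detO (S \<union> T) = detO S + detO T + (w1 S * w2 T + w2 S * w1 T - 2 * w3 S * w3 T)"
  using omg_Un[OF integrable(1) assms] omg_Un[OF integrable(2) assms] omg_Un[OF integrable(3) assms]
  by (simp add: detOmega_def algebra_simps power2_eq_square)

lemma sqrt_detO_Un_ge:
  assumes "S \<in> sets borel" "T \<in> sets borel" "S \<inter> T = {}"
  shows "sqrt (detO S) + sqrt (detO T) \<le> sqrt (detO (S \<union> T))"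
proof (rule real_le_rsqrt)
  have "2 * sqrt (detO S * detO T) \<le> w1 S * w2 T + w2 S * w1 T - 2 * w3 S * w3 T"
    unfolding detOmega_def by (rule psd2_mixed_term_ge) (use psd2_omg assms in auto)
  then show "(sqrt (detO S) + sqrt (detO T))\<^sup>2 \<le> detO (S \<union> T)"
    using detO_Un[OF assms] detO_nonneg[OF assms(1)] detO_nonneg[OF assms(2)]
    by (simp add: power2_eq_square algebra_simps real_sqrt_mult)
qed

lemma sqrt_detO_UN_ge:
  assumes "finite I" "\<And>i. i \<in> I \<Longrightarrow> A i \<in> sets borel"
    and "\<And>i j. i \<in> I \<Longrightarrow> j \<in> I \<Longrightarrow> i \<noteq> j \<Longrightarrow> A i \<inter> A j = {}"
  shows "(\<Sum>i\<in>I. sqrt (detO (A i))) \<le> sqrt (detO (\<Union>i\<in>I. A i))"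
  using assms
proof (induction I rule: finite_induct)
  case empty
  then show ?case by simp
next
  case (insert i I)
  then have "sqrt (detO (A i)) + (\<Sum>i\<in>I. sqrt (detO (A i))) \<le> sqrt (detO (A i)) + sqrt (detO (\<Union>i\<in>I. A i))"
    by simp
  also have "\<dots> \<le> sqrt (detO (A i \<union> (\<Union>i\<in>I. A i)))"
    by (rule sqrt_detO_Un_ge) (use insert in auto)
  finally show ?case using insert by simp
qed

lemma detO_mono:
  assumes "S \<in> sets borel" "T \<in> sets borel" "S \<subseteq> T"
  shows "detO S \<le> detO T"
proof -
  have "sqrt (detO S) \<le> sqrt (detO S) + sqrt (detO (T - S))"
    using detO_nonneg[of "T - S"] assms by simp
  also have "\<dots> \<le> sqrt (detO (S \<union> (T - S)))" by (rule sqrt_detO_Un_ge) (use assms in auto)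
  finally show ?thesis using assms by (simp add: Un_absorb1)
qed

lemma detO_strict_mono:
  assumes "S \<in> sets borel" "T \<in> sets borel" "S \<subseteq> T"
    and "0 < detO S" "0 < w1 (T - S) + w2 (T - S)"
  shows "detO S < detO T"
proof -
  have "T - S \<in> sets borel" using assms by auto
  have "0 < w1 S * w2 (T - S) + w2 S * w1 (T - S) - 2 * w3 S * w3 (T - S)"
    by (rule psd2_mixed_term_pos)
      (use w1_nonneg w2_nonneg psd2_omg[OF \<open>T - S \<in> sets borel\<close>] assms in \<open>auto simp: detOmega_def\<close>)
  then show ?thesis
    using detO_Un[of S "T - S"] detO_nonneg[OF \<open>T - S \<in> sets borel\<close>] assms
    by (simp add: Un_absorb1)
qed

text \<open>The Schur complement detO S / w1 S is monotone in S.\<close>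

lemma detO_w1_cross_le:
  assumes "S \<in> sets borel" "T \<in> sets borel" "S \<subseteq> T"
  shows "detO S * w1 T \<le> w1 S * detO T"
proof -
  have "T - S \<in> sets borel" "S \<inter> (T - S) = {}" "S \<union> (T - S) = T" using assms by auto
  then have "w1 T = w1 S + w1 (T - S)" "w2 T = w2 S + w2 (T - S)" "w3 T = w3 S + w3 (T - S)"
    using omg_Un[OF integrable(1)] omg_Un[OF integrable(2)] omg_Un[OF integrable(3)] assms
    by metis+
  moreover have "(w1 S + w1 (T - S)) * (w1 S * w2 S - (w3 S)\<^sup>2) \<le>
      w1 S * ((w1 S + w1 (T - S)) * (w2 S + w2 (T - S)) - (w3 S + w3 (T - S))\<^sup>2)"
    by (rule psd2_det_add_ge) (use w1_nonneg psd2_omg[OF \<open>T - S \<in> sets borel\<close>] in auto)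
  ultimately show ?thesis unfolding detOmega_def by (simp add: algebra_simps)
qed

definition sqrt_det :: "real \<Rightarrow> real" where
  "sqrt_det x = sqrt (g1 x * g2 x - (g3 x)\<^sup>2)"

lemma sqrt_det_measurable[measurable]: "sqrt_det \<in> borel_measurable borel"
  unfolding sqrt_det_def by measurable

lemma integrable_sqrt_det: "integrable lborel sqrt_det"
proof (rule Bochner_Integration.integrable_bound)
  show "integrable lborel (\<lambda>x. (g1 x + g2 x) / 2)" using integrable by simp
  show "AE x in lborel. norm (sqrt_det x) \<le> norm ((g1 x + g2 x) / 2)"
    using psd
  proof eventually_elim
    case (elim x)
    have "((g1 x + g2 x) / 2)\<^sup>2 - (g1 x * g2 x - (g3 x)\<^sup>2) = ((g1 x - g2 x) / 2)\<^sup>2 + (g3 x)\<^sup>2"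
      by (simp add: power2_eq_square field_simps)
    then have "g1 x * g2 x - (g3 x)\<^sup>2 \<le> ((g1 x + g2 x) / 2)\<^sup>2"
      using zero_le_power2[of "(g1 x - g2 x) / 2"] zero_le_power2[of "g3 x"] by linarith
    then have "sqrt_det x \<le> (g1 x + g2 x) / 2"
      unfolding sqrt_det_def using elim by (intro real_le_lsqrt) (auto simp: psd2_def)
    then show ?case using elim by (simp add: sqrt_det_def psd2_def)
  qed
qed simp

text \<open>The mixed term of det (M + H(x)) dominates 2 sqrt (det M det H(x)); integrate over S.\<close>

lemma omg_sqrt_det_mixed_le:
  assumes S: "S \<in> sets borel" and M: "psd2 M1 M2 M3"
  shows "2 * sqrt (M1 * M2 - M3\<^sup>2) * omg sqrt_det S \<le> M2 * w1 S + M1 * w2 S - 2 * M3 * w3 S"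
proof -
  define dM where "dM = M1 * M2 - M3\<^sup>2"
  have "2 * sqrt dM * omg sqrt_det S \<le> omg (\<lambda>x. M2 * g1 x + M1 * g2 x + (- 2 * M3) * g3 x) S"
    unfolding omg_def set_integral_mult_right[symmetric]
  proof (rule set_integral_mono_AE)
    show "set_integrable lborel S (\<lambda>x. 2 * sqrt dM * sqrt_det x)"
      by (intro set_integrable_mult_right set_integrable_of_integrable integrable_sqrt_det S)
    show "set_integrable lborel S (\<lambda>x. M2 * g1 x + M1 * g2 x + - 2 * M3 * g3 x)"
      by (intro set_integral_add(1) set_integrable_mult_right set_integrable_of_integrable integrable S)
    show "AE x\<in>S in lborel. 2 * sqrt dM * sqrt_det x \<le> M2 * g1 x + M1 * g2 x + - 2 * M3 * g3 x"
      using psd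
    proof eventually_elim
      case (elim x)
      have "2 * sqrt (dM * (g1 x * g2 x - (g3 x)\<^sup>2)) \<le> M1 * g2 x + M2 * g1 x - 2 * M3 * g3 x"
        unfolding dM_def by (rule psd2_mixed_term_ge) fact+
      then show ?case unfolding sqrt_det_def real_sqrt_mult by (simp add: algebra_simps)
    qed
  qed
  then show ?thesis unfolding omg_lincomb[OF S] dM_def by simp
qed

text \<open>Apply the previous lemma to the positive definite matrix M = Omega(S) + e I and let e tend
  to 0.\<close>

lemma omg_sqrt_det_le:
  assumes S: "S \<in> sets borel"
  shows "omg sqrt_det S \<le> sqrt (detO S)"
proof -
  define T where "T = w1 S + w2 S"
  have bound: "omg sqrt_det S \<le> sqrt (detO S + e * T + e\<^sup>2)" if "0 < e" for e
  proof -
    define dM where "dM = detO S + e * T + e\<^sup>2"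
    have dM_eq: "dM = (w1 S + e) * (w2 S + e) - (w3 S)\<^sup>2"
      by (simp add: dM_def T_def detOmega_def algebra_simps power2_eq_square)
    have "0 < dM" using detO_nonneg[OF S] w1_nonneg[of S] w2_nonneg[of S] that
      by (simp add: dM_def T_def add_nonneg_pos)
    then have "psd2 (w1 S + e) (w2 S + e) (w3 S)"
      using w1_nonneg[of S] w2_nonneg[of S] that by (auto simp: psd2_def dM_eq)
    then have "2 * sqrt dM * omg sqrt_det S \<le> (w2 S + e) * w1 S + (w1 S + e) * w2 S - 2 * w3 S * w3 S"
      unfolding dM_eq by (rule omg_sqrt_det_mixed_le[OF S])
    also have "\<dots> \<le> 2 * dM"
      using that w1_nonneg[of S] w2_nonneg[of S]
      by (simp add: dM_def T_def detOmega_def algebra_simps power2_eq_square)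
    also have "\<dots> = 2 * sqrt dM * sqrt dM" using \<open>0 < dM\<close> by simp
    finally have "sqrt dM * omg sqrt_det S \<le> sqrt dM * sqrt dM" by simp
    then have "omg sqrt_det S \<le> sqrt dM"
      by (rule mult_left_le_imp_le) (use \<open>0 < dM\<close> in simp)
    then show ?thesis by (simp add: dM_def)
  qed
  have "((\<lambda>e. sqrt (detO S + e * T + e\<^sup>2)) \<longlongrightarrow> sqrt (detO S + 0 * T + 0\<^sup>2)) (at_right 0)"
    by (intro tendsto_intros)
  moreover have "eventually (\<lambda>e. omg sqrt_det S \<le> sqrt (detO S + e * T + e\<^sup>2)) (at_right 0)"
    using eventually_at_right_less by (rule eventually_mono) (rule bound)
  ultimately show ?thesis
    using trivial_limit_at_right_real[of "0::real"] by (intro tendsto_lowerbound) auto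
qed

end

sublocale psd_hamiltonian \<subseteq> G1: nonneg_integrable g1
  by unfold_locales (rule integrable(1), rule g1_nonneg)

section \<open>A partition of (a, b) into links of equal determinant\<close>

text \<open>The parameters th and sh are the compatible pair t-hat(r) and s-hat(\<cdot>; r) for the cut-off
  Hamiltonian, and \<delta> is c / r^2; intervals are half-open, which does not change the integrals.\<close>

locale compatible_pair = psd_hamiltonian +
  fixes a :: real and b :: ereal and \<delta> :: real and th :: real and sh :: "real \<Rightarrow> real"
  assumes a_lt_b: "ereal a < b"
    and vanish_outside: "\<And>x. \<not> (a < x \<and> ereal x < b) \<Longrightarrow> g1 x = 0 \<and> g2 x = 0 \<and> g3 x = 0"
    and trace_pos: "AE x in lborel. a < x \<and> ereal x < b \<longrightarrow> 0 < g1 x + g2 x"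
    and delta_pos: "0 < \<delta>"
    and th: "a < th" "ereal th < b" "detO {a..<th} = \<delta>"
    and sh: "\<And>t. th \<le> t \<Longrightarrow> ereal t < b \<Longrightarrow> a \<le> sh t \<and> sh t \<le> t \<and> detO {sh t..<t} = \<delta>"
begin

lemma ereal_less_b_mono: "x \<le> y \<Longrightarrow> ereal y < b \<Longrightarrow> ereal x < b"
  by (meson ereal_less_eq(3) le_less_trans)

lemma trace_omg_pos:
  assumes "a \<le> s" "s < t" "ereal t \<le> b"
  shows "0 < w1 {s..<t} + w2 {s..<t}"
proof -
  have "AE x in lborel. x \<in> {s<..<t} \<longrightarrow> 0 < g1 x + g2 x"
    using trace_pos
  proof eventually_elim
    case (elim x)
    show ?case
    proof
      assume "x \<in> {s<..<t}"
      then have "ereal x < b" using assms(3) by (auto intro: less_le_trans[of "ereal x" "ereal t"])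
      then show "0 < g1 x + g2 x" using elim assms \<open>x \<in> {s<..<t}\<close> by auto
    qed
  qed
  then have "0 < omg (\<lambda>x. g1 x + g2 x) {s..<t}"
    using integrable psd assms(2) by (intro omg_Ico_pos) (auto simp: psd2_def elim: eventually_mono)
  then show ?thesis using omg_lincomb[of "{s..<t}" 1 1 0] by simp
qed

lemma detO_Ico_strict_mono:
  assumes "a \<le> s'" "s' \<le> s" "s \<le> t" "t \<le> t'" "ereal t' \<le> b" "s' < s \<or> t < t'"
    and "0 < detO {s..<t}"
  shows "detO {s..<t} < detO {s'..<t'}"
proof (rule detO_strict_mono)
  have "ereal s \<le> b" using assms by (meson ereal_less_eq(3) order_trans)
  obtain u v where uv: "a \<le> u" "u < v" "ereal v \<le> b" "{u..<v} \<subseteq> {s'..<t'} - {s..<t}"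
  proof (cases "s' < s")
    case True
    then show ?thesis using assms \<open>ereal s \<le> b\<close> by (intro that[of s' s]) auto
  next
    case False
    then show ?thesis using assms by (intro that[of t t']) auto
  qed
  have "0 < w1 {u..<v} + w2 {u..<v}" by (rule trace_omg_pos) fact+
  moreover have "w1 {u..<v} \<le> w1 ({s'..<t'} - {s..<t})" "w2 {u..<v} \<le> w2 ({s'..<t'} - {s..<t})"
    using uv by (auto intro!: omg_mono integrable g1_nonneg g2_nonneg)
  ultimately show "0 < w1 ({s'..<t'} - {s..<t}) + w2 ({s'..<t'} - {s..<t})" by simp
qed (use assms in auto)

lemma continuous_on_detO_Ico: "continuous_on {s..} (\<lambda>t. detO {s..<t})"
  unfolding detOmega_def by (intro continuous_intros continuous_on_omg_Ico integrable)

lemma tendsto_detO_Ico: "((\<lambda>t. detO {s..<t}) \<longlongrightarrow> detO {s..}) at_top"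
  unfolding detOmega_def by (intro tendsto_intros tendsto_omg_Ico_at_top integrable)

lemma detO_Ico_beyond_b:
  assumes "\<not> ereal u < b" "s \<le> u" "u \<le> t"
  shows "detO {s..<t} = detO {s..<u}"
proof -
  have "omg g {s..<t} = omg g {s..<u}"
    if "integrable lborel g" "\<And>x. \<not> ereal x < b \<Longrightarrow> g x = 0" for g
  proof -
    have "omg g {u..<t} = 0"
      unfolding omg_def using assms that(2) ereal_less_b_mono
      by (subst set_lebesgue_integral_cong[where g="\<lambda>_. 0"]) (auto simp: set_lebesgue_integral_def)
    then show ?thesis using omg_Ico_split[OF that(1), of s u t] assms by simp
  qed
  then show ?thesis unfolding detOmega_def using integrable vanish_outside by simp
qed

definition has_link :: "real \<Rightarrow> bool" where
  "has_link s \<longleftrightarrow> (\<exists>t. s < t \<and> ereal t < b \<and> detO {s..<t} = \<delta>)"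

definition link_end :: "real \<Rightarrow> real" where
  "link_end s = (SOME t. s < t \<and> ereal t < b \<and> detO {s..<t} = \<delta>)"

lemma link_end: "has_link s \<Longrightarrow> s < link_end s \<and> ereal (link_end s) < b \<and> detO {s..<link_end s} = \<delta>"
  unfolding has_link_def link_end_def by (rule someI_ex)

lemma link_end_unique:
  assumes "a \<le> s" "s < t" "ereal t < b" "detO {s..<t} = \<delta>"
  shows "link_end s = t"
proof -
  have e: "s < link_end s" "ereal (link_end s) < b" "detO {s..<link_end s} = \<delta>"
    using link_end assms unfolding has_link_def by blast+
  show ?thesis
  proof (rule ccontr)
    assume "link_end s \<noteq> t"
    then consider "link_end s < t" | "t < link_end s" by linarith
    then show False
    proof cases
      case 1
      then have "detO {s..<link_end s} < detO {s..<t}"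
        using assms e delta_pos by (intro detO_Ico_strict_mono) auto
      then show False using assms e by simp
    next
      case 2
      then have "detO {s..<t} < detO {s..<link_end s}"
        using assms e delta_pos by (intro detO_Ico_strict_mono) auto
      then show False using assms e by simp
    qed
  qed
qed

definition pt :: "nat \<Rightarrow> real" where
  "pt k = (link_end ^^ k) a"

lemma pt_0[simp]: "pt 0 = a" and pt_Suc: "pt (Suc k) = link_end (pt k)"
  by (simp_all add: pt_def)

definition links_exist :: "nat \<Rightarrow> bool" where
  "links_exist k \<longleftrightarrow> (\<forall>i<k. has_link (pt i))"

lemma links_exist_step:
  "links_exist k \<Longrightarrow> i < k \<Longrightarrow>
    pt i < pt (Suc i) \<and> ereal (pt (Suc i)) < b \<and> detO {pt i..<pt (Suc i)} = \<delta>"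
  unfolding links_exist_def pt_Suc using link_end by blast

lemma links_exist_pt_mono:
  assumes "links_exist k" "i \<le> j" "j \<le> k"
  shows "pt i \<le> pt j"
  using assms(2,3)
proof (induction j rule: dec_induct)
  case (step j)
  then show ?case using links_exist_step[OF assms(1), of j] by fastforce
qed simp

text \<open>The links are disjoint and each carries sqrt \<delta> of the superadditive set function
  sqrt (detO \<cdot>), so there are at most sqrt (detO UNIV) / sqrt \<delta> of them.\<close>

lemma links_exist_bound:
  assumes "links_exist k"
  shows "real k * sqrt \<delta> \<le> sqrt (detO UNIV)"
proof -
  have "(\<Sum>i<k. sqrt (detO {pt i..<pt (Suc i)})) \<le> sqrt (detO (\<Union>i<k. {pt i..<pt (Suc i)}))"
  proof (rule sqrt_detO_UN_ge)
    fix i j assume "i \<in> {..<k}" "j \<in> {..<k}" "i \<noteq> j"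
    then have "pt (Suc i) \<le> pt j \<or> pt (Suc j) \<le> pt i"
      using links_exist_pt_mono[OF assms] by (metis lessThan_iff linorder_neqE_nat Suc_leI less_imp_le_nat)
    then show "{pt i..<pt (Suc i)} \<inter> {pt j..<pt (Suc j)} = {}" by auto
  qed auto
  also have "\<dots> \<le> sqrt (detO UNIV)" by (simp add: detO_mono)
  finally show ?thesis using links_exist_step[OF assms] by simp
qed

lemma has_link_a: "has_link a"
  unfolding has_link_def using th by auto

lemma links_exist_1: "links_exist 1"
  unfolding links_exist_def using has_link_a by simp

definition n :: nat where
  "n = (GREATEST k. links_exist k)"

lemma links_exist_le_n: "links_exist k \<Longrightarrow> k \<le> n"
proof -
  have "k \<le> nat \<lceil>sqrt (detO UNIV) / sqrt \<delta>\<rceil>" if "links_exist k" for k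
  proof -
    have "real k \<le> sqrt (detO UNIV) / sqrt \<delta>"
      using links_exist_bound[OF that] delta_pos by (simp add: field_simps)
    then show ?thesis by linarith
  qed
  then show "links_exist k \<Longrightarrow> k \<le> n" unfolding n_def by (blast intro: Greatest_le_nat)
qed

lemma links_exist_n: "links_exist n"
  unfolding n_def
  by (rule GreatestI_nat[where k=1]) (use links_exist_1 links_exist_le_n[unfolded n_def] in auto)

lemma n_ge_1: "1 \<le> n"
  by (rule links_exist_le_n[OF links_exist_1])

lemma not_has_link_last: "\<not> has_link (pt n)"
proof
  assume "has_link (pt n)"
  then have "links_exist (Suc n)" using links_exist_n by (auto simp: links_exist_def less_Suc_eq)
  then show False using links_exist_le_n by fastforce
qed

lemma pt_step: "i < n \<Longrightarrow> pt i < pt (Suc i) \<and> ereal (pt (Suc i)) < b \<and> detO {pt i..<pt (Suc i)} = \<delta>"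
  by (rule links_exist_step[OF links_exist_n])

lemma pt_mono: "i \<le> j \<Longrightarrow> j \<le> n \<Longrightarrow> pt i \<le> pt j"
  by (rule links_exist_pt_mono[OF links_exist_n])

lemma a_le_pt: "i \<le> n \<Longrightarrow> a \<le> pt i"
  using pt_mono[of 0 i] by simp

lemma pt_less_b: "i \<le> n \<Longrightarrow> ereal (pt i) < b"
  using pt_step[of "i - 1"] a_lt_b by (cases i) auto

lemma pt_1: "pt 1 = th"
  using link_end_unique[of a th] th by (simp add: pt_Suc)

lemma th_le_pt: "1 \<le> k \<Longrightarrow> k \<le> n \<Longrightarrow> th \<le> pt k"
  using pt_mono[of 1 k] pt_1 by simp

lemma detO_from_last_le:
  assumes "pt n \<le> t"
  shows "detO {pt n..<t} \<le> \<delta>"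
proof (rule ccontr)
  assume gt: "\<not> ?thesis"
  have "continuous_on {pt n..t} (\<lambda>t. detO {pt n..<t})"
    using continuous_on_detO_Ico by (rule continuous_on_subset) auto
  then obtain w where w: "pt n \<le> w" "w \<le> t" "detO {pt n..<w} = \<delta>"
    using IVT'[of "\<lambda>t. detO {pt n..<t}" "pt n" \<delta> t] gt assms delta_pos by auto
  have "pt n < w" using w delta_pos by (cases "w = pt n") auto
  show False
  proof (cases "ereal w < b")
    case True
    then have "has_link (pt n)" using \<open>pt n < w\<close> w unfolding has_link_def by blast
    then show False using not_has_link_last by simp
  next
    case False
    then show False using detO_Ico_beyond_b[of w "pt n" t] w gt by simp
  qed
qed

lemma detO_from_last_less:
  assumes "pt n \<le> t" "ereal t < b"
  shows "detO {pt n..<t} < \<delta>"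
proof -
  have "detO {pt n..<t} \<noteq> \<delta>"
  proof
    assume "detO {pt n..<t} = \<delta>"
    then have "pt n < t" using assms delta_pos by (cases "t = pt n") auto
    then have "has_link (pt n)" using assms \<open>detO {pt n..<t} = \<delta>\<close> unfolding has_link_def by blast
    then show False using not_has_link_last by simp
  qed
  then show ?thesis using detO_from_last_le[OF assms(1)] by simp
qed

lemma detO_tail_le: "detO {pt n..} \<le> \<delta>"
  by (rule tendsto_upperbound[OF tendsto_detO_Ico])
    (auto intro: eventually_at_top_linorderI detO_from_last_le)

lemma pt_le_sh:
  assumes "i < n" "th \<le> t" "ereal t < b" "pt (Suc i) \<le> t"
  shows "pt i \<le> sh t"
proof (rule ccontr)
  assume "\<not> pt i \<le> sh t"
  then have "detO {pt i..<pt (Suc i)} < detO {sh t..<t}"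
    using sh[OF assms(2,3)] pt_step[OF assms(1)] assms delta_pos
    by (intro detO_Ico_strict_mono) auto
  then show False using sh[OF assms(2,3)] pt_step[OF assms(1)] by simp
qed

lemma sh_le_pt:
  assumes "i < n" "th \<le> t" "t \<le> pt (Suc i)"
  shows "sh t \<le> pt i"
proof (rule ccontr)
  have "ereal t < b" using assms pt_step[OF assms(1)] ereal_less_b_mono by blast
  assume "\<not> sh t \<le> pt i"
  then have "detO {sh t..<t} < detO {pt i..<pt (Suc i)}"
    using sh[OF assms(2) \<open>ereal t < b\<close>] pt_step[OF assms(1)] a_le_pt[of i] assms delta_pos
    by (intro detO_Ico_strict_mono) auto
  then show False using sh[OF assms(2) \<open>ereal t < b\<close>] pt_step[OF assms(1)] by simp
qed

lemma sh_le_last: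
  assumes "th \<le> t" "ereal t < b" "pt n \<le> t"
  shows "sh t \<le> pt n"
proof (rule ccontr)
  assume "\<not> sh t \<le> pt n"
  then have "detO {sh t..<t} \<le> detO {pt n..<t}" by (intro detO_mono) auto
  then show False using detO_from_last_less[OF assms(3,2)] sh[OF assms(1,2)] by simp
qed

lemma sh_mono:
  assumes "th \<le> t" "t \<le> t'" "ereal t' < b"
  shows "sh t \<le> sh t'"
proof (rule ccontr)
  have "ereal t < b" using assms ereal_less_b_mono by blast
  assume "\<not> sh t \<le> sh t'"
  then have "detO {sh t..<t} < detO {sh t'..<t'}"
    using sh[OF assms(1) \<open>ereal t < b\<close>] sh[of t'] assms delta_pos
    by (intro detO_Ico_strict_mono) auto
  then show False using sh[OF assms(1) \<open>ereal t < b\<close>] sh[of t'] assms by simp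
qed

section \<open>The kernel and its integral\<close>

definition kernel_domain :: "real set" where
  "kernel_domain = {t. th \<le> t \<and> ereal t < b}"

definition kernel :: "real \<Rightarrow> real" where
  "kernel t = g1 t / w1 {sh t..<t}"

lemma less_b_measurable[measurable]: "{t::real. ereal t < b} \<in> sets borel"
proof -
  have "open {t::real. ereal t < b}"
    by (intro open_Collect_less continuous_on_ereal continuous_intros)
  then show ?thesis by auto
qed

lemma kernel_domain_measurable[measurable]: "kernel_domain \<in> sets borel"
proof -
  have "kernel_domain = {th..} \<inter> {t. ereal t < b}" by (auto simp: kernel_domain_def)
  then show ?thesis by simp
qed

lemma w2_UNIV_pos: "0 < w2 UNIV"
proof (rule ccontr)
  assume "\<not> 0 < w2 UNIV"
  then have "w1 {a..<th} * w2 UNIV \<le> 0" using w1_nonneg by (simp add: mult_nonneg_nonpos)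
  then show False using detO_le_w1_mult_w2_UNIV[of "{a..<th}"] th delta_pos by simp
qed

lemma w1_sh_pos: "th \<le> t \<Longrightarrow> ereal t < b \<Longrightarrow> 0 < w1 {sh t..<t}"
  using sh delta_pos by (auto intro: w1_pos_if_detO_pos)

lemma mono_sh_extension: "mono (\<lambda>t. if ereal t < b then sh (max t th) else real_of_ereal b)"
proof
  fix t t' :: real assume "t \<le> t'"
  show "(if ereal t < b then sh (max t th) else real_of_ereal b) \<le>
    (if ereal t' < b then sh (max t' th) else real_of_ereal b)"
  proof (cases "ereal t' < b")
    case True
    then show ?thesis
      using \<open>t \<le> t'\<close> sh_mono[of "max t th" "max t' th"] ereal_less_b_mono[of t t'] th
      by (simp add: max_def)
  next
    case False
    then obtain B where "b = ereal B" using a_lt_b by (cases b) auto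
    have "sh (max t th) \<le> B" if "ereal t < b"
    proof -
      have "th \<le> max t th" "ereal (max t th) < b" using that th by (auto simp: max_def)
      then show ?thesis using sh[of "max t th"] \<open>b = ereal B\<close> by fastforce
    qed
    then show ?thesis using False \<open>b = ereal B\<close> by auto
  qed
qed

text \<open>On kernel_domain the kernel is g1 t / (W t - W (sh' t)) with W and sh' monotone, hence measurable.\<close>

lemma kernel_measurable: "set_borel_measurable lborel kernel_domain kernel"
proof -
  define sh' where "sh' t = (if ereal t < b then sh (max t th) else real_of_ereal b)" for t
  define W where "W y = w1 {..<y}" for y
  have "mono sh'" using mono_sh_extension by (simp add: sh'_def[abs_def])
  have "W x \<le> W y" if "x \<le> y" for x y
    using omg_mono[OF integrable(1) g1_nonneg, of "{..<x}" "{..<y}"] that by (simp add: W_def)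
  then have "mono W" by (rule monoI)
  have [measurable]: "sh' \<in> borel_measurable borel" "W \<in> borel_measurable borel"
    using \<open>mono sh'\<close> \<open>mono W\<close> by (simp_all add: borel_measurable_mono)
  have "indicator kernel_domain t *\<^sub>R (g1 t / (W t - W (sh' t))) = indicator kernel_domain t *\<^sub>R kernel t" for t
  proof (cases "t \<in> kernel_domain")
    case True
    then have t: "th \<le> t" "ereal t < b" by (auto simp: kernel_domain_def)
    have "{..<t} = {..<sh t} \<union> {sh t..<t}" "{..<sh t} \<inter> {sh t..<t} = {}"
      using sh[OF t] by auto
    then have "W t - W (sh t) = w1 {sh t..<t}"
      unfolding W_def using omg_Un[OF integrable(1), of "{..<sh t}" "{sh t..<t}"] by simp
    moreover have "sh' t = sh t" using t by (simp add: sh'_def max_absorb1)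
    ultimately show ?thesis by (simp add: kernel_def)
  qed simp
  moreover have "(\<lambda>t. indicator kernel_domain t *\<^sub>R (g1 t / (W t - W (sh' t)))) \<in> borel_measurable lborel"
    by measurable
  ultimately show ?thesis unfolding set_borel_measurable_def by simp
qed

lemma kernel_integrable: "set_integrable lborel kernel_domain kernel"
proof (rule set_integrable_bound[where f="\<lambda>t. g1 t * (w2 UNIV / \<delta>)"])
  show "set_integrable lborel kernel_domain (\<lambda>t. g1 t * (w2 UNIV / \<delta>))"
    by (intro set_integrable_mult_left set_integrable_of_integrable integrable) simp
  show "AE t in lborel. t \<in> kernel_domain \<longrightarrow> norm (kernel t) \<le> norm (g1 t * (w2 UNIV / \<delta>))"
  proof (intro AE_I2 impI)
    fix t assume "t \<in> kernel_domain"
    then have t: "th \<le> t" "ereal t < b" by (auto simp: kernel_domain_def)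
    have "\<delta> \<le> w1 {sh t..<t} * w2 UNIV"
      using detO_le_w1_mult_w2_UNIV[of "{sh t..<t}"] sh[OF t] by simp
    then have "1 / w1 {sh t..<t} \<le> w2 UNIV / \<delta>"
      using w1_sh_pos[OF t] delta_pos by (simp add: field_simps)
    then show "norm (kernel t) \<le> norm (g1 t * (w2 UNIV / \<delta>))"
      using w1_sh_pos[OF t] w2_UNIV_pos delta_pos
      by (simp add: kernel_def abs_mult divide_inverse mult_left_mono flip: inverse_eq_divide)
  qed
qed (rule kernel_measurable)

definition link :: "nat \<Rightarrow> real set" where
  "link k = (if k < n then {pt k..<pt (Suc k)} else {t. pt n \<le> t \<and> ereal t < b})"

lemma link_measurable[measurable]: "link k \<in> sets borel"
proof -
  have "{t. pt n \<le> t \<and> ereal t < b} = {pt n..} \<inter> {t. ereal t < b}" by auto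
  then show ?thesis by (simp add: link_def)
qed

lemma linkD:
  assumes "1 \<le> k" "k \<le> n" "t \<in> link k"
  shows "th \<le> t" "ereal t < b" "pt k \<le> t" "pt (k - 1) \<le> sh t" "sh t \<le> pt k"
proof -
  have "pt k \<le> t" using assms by (auto simp: link_def split: if_splits)
  then show "th \<le> t" using th_le_pt[OF assms(1,2)] by simp
  show "ereal t < b"
    using assms pt_step[of k] ereal_less_b_mono[of t "pt (Suc k)"]
    by (auto simp: link_def split: if_splits)
  show "pt (k - 1) \<le> sh t"
    using pt_le_sh[of "k - 1" t] assms \<open>th \<le> t\<close> \<open>ereal t < b\<close> \<open>pt k \<le> t\<close> by simp
  show "sh t \<le> pt k"
    using sh_le_pt[of k t] sh_le_last[of t] assms \<open>th \<le> t\<close> \<open>ereal t < b\<close> \<open>pt k \<le> t\<close>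
    by (cases "k < n") (auto simp: link_def)
  show "pt k \<le> t" by fact
qed

lemma link_subset_kernel_domain: "1 \<le> k \<Longrightarrow> k \<le> n \<Longrightarrow> link k \<subseteq> kernel_domain"
  using linkD(1,2) by (auto simp: kernel_domain_def)

lemma integral_kernel_eq_sum_links:
  "(LINT t:kernel_domain|lborel. kernel t) = (\<Sum>k=1..n. LINT t:link k|lborel. kernel t)"
proof -
  have Ico: "(LINT t:{pt 1..<pt m}|lborel. kernel t) = (\<Sum>k\<in>{1..<m}. LINT t:link k|lborel. kernel t)"
    if "1 \<le> m" "m \<le> n" for m
    using that
  proof (induction m rule: dec_induct)
    case (step m)
    have "{pt 1..<pt (Suc m)} \<subseteq> kernel_domain"
    proof
      fix x assume "x \<in> {pt 1..<pt (Suc m)}"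
      then show "x \<in> kernel_domain"
        using pt_1 pt_less_b[of "Suc m"] step ereal_less_b_mono[of x "pt (Suc m)"]
        by (auto simp: kernel_domain_def)
    qed
    then have "set_integrable lborel {pt 1..<pt (Suc m)} kernel"
      using set_integrable_subset[OF kernel_integrable] by simp
    then show ?case
      using set_integral_Ico_split[of "pt 1" "pt (Suc m)" kernel "pt m"] step pt_mono[of 1 m]
        pt_step[of m]
      by (simp add: link_def)
  qed (simp add: set_lebesgue_integral_def)
  have kernel_domain_eq: "kernel_domain = {pt 1..<pt n} \<union> link n"
    using pt_1 th_le_pt[OF n_ge_1 order_refl] pt_less_b[of n]
    by (auto simp: kernel_domain_def link_def intro: ereal_less_b_mono[OF less_imp_le])
  have "set_integrable lborel {pt 1..<pt n} kernel" "set_integrable lborel (link n) kernel"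
    using set_integrable_subset[OF kernel_integrable] kernel_domain_eq by auto
  moreover have "{pt 1..<pt n} \<inter> link n = {}" by (auto simp: link_def)
  ultimately have "(LINT t:kernel_domain|lborel. kernel t) =
      (LINT t:{pt 1..<pt n}|lborel. kernel t) + (LINT t:link n|lborel. kernel t)"
    unfolding kernel_domain_eq by (intro set_integral_Un)
  also have "\<dots> = (\<Sum>k=1..n. LINT t:link k|lborel. kernel t)"
    using Ico[OF n_ge_1 order_refl] n_ge_1 by (simp add: sum.atLeastLessThan_Suc atLeastLessThanSuc_atLeastAtMost[symmetric])
  finally show ?thesis .
qed

definition block :: "nat \<Rightarrow> real set" where
  "block k = (if k < n then {pt (k - 1)..<pt (Suc k)} else {pt (k - 1)..})"

lemma block_measurable[measurable]: "block k \<in> sets borel"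
  by (simp add: block_def)

lemma delta_le_detO_block:
  assumes "1 \<le> k" "k \<le> n"
  shows "\<delta> \<le> detO (block k)"
proof -
  have "{pt (k - 1)..<pt k} \<subseteq> block k"
    using assms pt_mono[of k "Suc k"] by (auto simp: block_def)
  then have "detO {pt (k - 1)..<pt k} \<le> detO (block k)" by (intro detO_mono) auto
  then show ?thesis using pt_step[of "k - 1"] assms by simp
qed

lemma kernel_le_div_max:
  assumes t: "th \<le> t" "ereal t < b" and "0 \<le> g1 t"
    and B: "B \<in> sets borel" "{sh t..<t} \<subseteq> B" "0 < detO B"
    and x: "sh t \<le> x" "x \<le> t"
  shows "kernel t \<le> g1 t / max (G1.F x t) (\<delta> * w1 B / detO B)"
proof -
  have "G1.F x t \<le> w1 {sh t..<t}"
    unfolding G1.F_def by (rule omg_mono[OF integrable(1) g1_nonneg]) (use x in auto)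
  moreover have "\<delta> * w1 B / detO B \<le> w1 {sh t..<t}"
    using detO_w1_cross_le[of "{sh t..<t}" B] B sh[OF t] by (simp add: pos_divide_le_eq)
  moreover have "0 < \<delta> * w1 B / detO B"
    using B delta_pos w1_pos_if_detO_pos by simp
  ultimately show ?thesis
    unfolding kernel_def using \<open>0 \<le> g1 t\<close> by (intro divide_left_mono) auto
qed

lemma integral_link_le_div_max:
  assumes k: "1 \<le> k" "k \<le> n"
  shows "(LINT t:link k|lborel. kernel t) \<le>
    (LINT t:link k|lborel. g1 t / max (G1.F (pt k) t) (\<delta> * w1 (block k) / detO (block k)))"
proof (rule set_integral_mono_AE)
  have "0 < detO (block k)" using delta_le_detO_block[OF k] delta_pos by simp
  then have "0 < \<delta> * w1 (block k) / detO (block k)" using delta_pos w1_pos_if_detO_pos by simp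
  then show "set_integrable lborel (link k)
      (\<lambda>t. g1 t / max (G1.F (pt k) t) (\<delta> * w1 (block k) / detO (block k)))"
    by (intro G1.set_integrable_div) auto
  show "set_integrable lborel (link k) kernel"
    using set_integrable_subset[OF kernel_integrable] link_subset_kernel_domain[OF k] by simp
  show "AE t\<in>link k in lborel. kernel t \<le> g1 t / max (G1.F (pt k) t) (\<delta> * w1 (block k) / detO (block k))"
    using g1_nonneg
  proof (eventually_elim, intro impI)
    case (elim t)
    assume "t \<in> link k"
    note t = linkD[OF k this]
    have "{sh t..<t} \<subseteq> block k" using t k \<open>t \<in> link k\<close> by (auto simp: block_def link_def)
    then show "kernel t \<le> g1 t / max (G1.F (pt k) t) (\<delta> * w1 (block k) / detO (block k))"
      using t elim \<open>0 < detO (block k)\<close> by (intro kernel_le_div_max) auto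
  qed
qed

lemma integral_link_le:
  assumes k: "1 \<le> k" "k \<le> n"
  shows "(LINT t:link k|lborel. kernel t) \<le> 2 * sqrt (detO (block k) / \<delta>)"
proof -
  define B m where "B = block k" and "m = \<delta> * w1 B / detO B"
  have "\<delta> \<le> detO B" using delta_le_detO_block[OF k] by (simp add: B_def)
  then have "0 < detO B" "0 < w1 B" using delta_pos w1_pos_if_detO_pos by auto
  then have "0 < m" using delta_pos by (simp add: m_def)
  define G where "G t = g1 t / max (G1.F (pt k) t) m" for t
  obtain F where "F \<le> w1 B" "(LINT t:link k|lborel. G t) \<le> 2 * sqrt (max 1 (F / m))"
  proof (cases "k < n")
    case True
    have "G1.F (pt k) (pt (Suc k)) \<le> w1 B"
      unfolding G1.F_def B_def block_def
      using True pt_mono[of "k - 1" k] by (intro omg_mono[OF integrable(1) g1_nonneg]) auto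
    moreover have "(LINT t:link k|lborel. G t) \<le> 2 * sqrt (max 1 (G1.F (pt k) (pt (Suc k)) / m))"
      unfolding G_def link_def
      using G1.integral_div_max_le_sqrt[OF \<open>0 < m\<close>, of "pt k" "pt (Suc k)"] True pt_step[of k] by simp
    ultimately show ?thesis by (rule that)
  next
    case False
    then have "k = n" using k by simp
    have "w1 {pt n..} \<le> w1 B"
      unfolding B_def block_def \<open>k = n\<close>
      using pt_mono[of "n - 1" n] by (intro omg_mono[OF integrable(1) g1_nonneg]) auto
    moreover have "(LINT t:link n|lborel. G t) = (LINT t:{pt n..}|lborel. G t)"
      by (rule set_integral_eq_off_finite[of "{}"])
        (use vanish_outside in \<open>auto simp: link_def G_def split: split_indicator\<close>)
    ultimately show ?thesis
      using G1.integral_Ici_div_max_le_sqrt[OF \<open>0 < m\<close>, of "pt n"] \<open>k = n\<close> that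
      unfolding G_def by auto
  qed
  moreover have "sqrt (max 1 (F / m)) \<le> sqrt (detO B / \<delta>)"
    unfolding m_def
    by (intro real_sqrt_le_mono max_one_div_le[OF delta_pos \<open>\<delta> \<le> detO B\<close> \<open>0 < w1 B\<close> \<open>F \<le> w1 B\<close>])
  ultimately show ?thesis
    using integral_link_le_div_max[OF k] unfolding B_def m_def G_def by linarith
qed

lemma block_disjoint:
  assumes "1 \<le> i" "Suc i < j" "j \<le> n"
  shows "block i \<inter> block j = {}"
proof -
  have "block i \<subseteq> {..<pt (Suc i)}" "block j \<subseteq> {pt (j - 1)..}"
    using assms by (auto simp: block_def)
  moreover have "pt (Suc i) \<le> pt (j - 1)" using assms by (intro pt_mono) auto
  ultimately show ?thesis by fastforce
qed

text \<open>Blocks of indices of equal parity are disjoint, so each parity contributes at most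
  sqrt (detO UNIV) by superadditivity.\<close>

lemma sum_sqrt_detO_block_le: "(\<Sum>k=1..n. sqrt (detO (block k))) \<le> 2 * sqrt (detO UNIV)"
proof -
  have sparse: "(\<Sum>k\<in>K. sqrt (detO (block k))) \<le> sqrt (detO UNIV)"
    if K: "K \<subseteq> {1..n}" "\<And>i j. i \<in> K \<Longrightarrow> j \<in> K \<Longrightarrow> i < j \<Longrightarrow> Suc i < j" for K
  proof -
    have "(\<Sum>k\<in>K. sqrt (detO (block k))) \<le> sqrt (detO (\<Union>k\<in>K. block k))"
    proof (rule sqrt_detO_UN_ge)
      fix i j assume "i \<in> K" "j \<in> K" "i \<noteq> j"
      then have "Suc i < j \<or> Suc j < i" using K(2) by (metis linorder_neqE_nat)
      moreover have "1 \<le> i" "1 \<le> j" "i \<le> n" "j \<le> n" using K(1) \<open>i \<in> K\<close> \<open>j \<in> K\<close> by auto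
      ultimately show "block i \<inter> block j = {}" using block_disjoint[of i j] block_disjoint[of j i] by blast
    qed (use finite_subset[OF K(1)] in auto)
    also have "\<dots> \<le> sqrt (detO UNIV)" by (intro real_sqrt_le_mono detO_mono) auto
    finally show ?thesis .
  qed
  have "(\<Sum>k=1..n. sqrt (detO (block k))) =
      (\<Sum>k\<in>{1..n} \<inter> {k. even k}. sqrt (detO (block k))) +
      (\<Sum>k\<in>{1..n} - {k. even k}. sqrt (detO (block k)))"
    by (rule sum.Int_Diff) simp
  moreover have "(\<Sum>k\<in>{1..n} \<inter> {k. even k}. sqrt (detO (block k))) \<le> sqrt (detO UNIV)"
    by (rule sparse) (auto, presburger)
  moreover have "(\<Sum>k\<in>{1..n} - {k. even k}. sqrt (detO (block k))) \<le> sqrt (detO UNIV)"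
    by (rule sparse) (auto, presburger)
  ultimately show ?thesis by linarith
qed

lemma integral_kernel_le: "(LINT t:kernel_domain|lborel. kernel t) \<le> 4 * sqrt (detO UNIV) / sqrt \<delta>"
proof -
  have "(LINT t:kernel_domain|lborel. kernel t) \<le> (\<Sum>k=1..n. 2 * sqrt (detO (block k) / \<delta>))"
    unfolding integral_kernel_eq_sum_links by (intro sum_mono integral_link_le) auto
  also have "\<dots> = 2 * (\<Sum>k=1..n. sqrt (detO (block k))) / sqrt \<delta>"
    by (simp add: real_sqrt_divide sum_divide_distrib sum_distrib_left)
  also have "\<dots> \<le> 2 * (2 * sqrt (detO UNIV)) / sqrt \<delta>"
    using sum_sqrt_detO_block_le delta_pos by (intro divide_right_mono mult_left_mono) auto
  finally show ?thesis by simp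
qed

definition link_mass :: "nat \<Rightarrow> real" where
  "link_mass i = w1 {pt i..<pt (Suc i)}"

lemma link_mass_pos: "i < n \<Longrightarrow> 0 < link_mass i"
  using pt_step[of i] delta_pos by (auto simp: link_mass_def intro: w1_pos_if_detO_pos)

text \<open>On link j + 1 the interval [sh t, t) starts after pt j, so the kernel dominates
  g1 t / (link_mass j + G1.F (pt (Suc j)) t).\<close>

lemma ln_le_integral_link:
  assumes "Suc j < n"
  shows "ln ((link_mass j + link_mass (Suc j)) / link_mass j) \<le> (LINT t:link (Suc j)|lborel. kernel t)"
proof -
  define x y where "x = pt (Suc j)" and "y = pt (Suc (Suc j))"
  have "0 < link_mass j" using link_mass_pos assms by simp
  have "x \<le> y" using pt_step[of "Suc j"] assms by (simp add: x_def y_def)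
  have link_eq: "link (Suc j) = {x..<y}" using assms by (simp add: link_def x_def y_def)
  have "ln ((link_mass j + G1.F x y) / link_mass j) \<le>
      (LINT t:{x..<y}|lborel. g1 t / (link_mass j + G1.F x t))"
    by (rule G1.ln_le_integral_div_shifted) fact+
  also have "\<dots> \<le> (LINT t:link (Suc j)|lborel. kernel t)"
    unfolding link_eq
  proof (rule set_integral_mono_AE)
    show "set_integrable lborel {x..<y} (\<lambda>t. g1 t / (link_mass j + G1.F x t))"
      by (rule G1.set_integrable_div) (use \<open>0 < link_mass j\<close> G1.F_nonneg in auto)
    show "set_integrable lborel {x..<y} kernel"
      using set_integrable_subset[OF kernel_integrable] link_subset_kernel_domain[of "Suc j"] assms
        link_eq
      by simp
    show "AE t\<in>{x..<y} in lborel. g1 t / (link_mass j + G1.F x t) \<le> kernel t"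
      using g1_nonneg
    proof (eventually_elim, intro impI)
      case (elim t)
      assume "t \<in> {x..<y}"
      then have "t \<in> link (Suc j)" using link_eq by simp
      then have t: "th \<le> t" "ereal t < b" "pt (Suc j) \<le> t" "pt j \<le> sh t" "sh t \<le> pt (Suc j)"
        using linkD[of "Suc j" t] assms by auto
      have "w1 {sh t..<t} \<le> w1 {pt j..<t}"
        by (rule omg_mono[OF integrable(1) g1_nonneg]) (use t assms in auto)
      also have "\<dots> = link_mass j + G1.F x t"
        unfolding link_mass_def G1.F_def x_def
        by (rule omg_Ico_split[OF integrable(1)]) (use t assms pt_step[of j] in auto)
      finally have "w1 {sh t..<t} \<le> link_mass j + G1.F x t" .
      moreover have "0 < w1 {sh t..<t}" using w1_sh_pos t by simp
      ultimately show "g1 t / (link_mass j + G1.F x t) \<le> kernel t"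
        unfolding kernel_def using elim by (intro divide_left_mono mult_pos_pos) auto
    qed
  qed
  finally show ?thesis by (simp add: link_mass_def G1.F_def x_def y_def)
qed

text \<open>By the AM-GM inequality each link contributes ln 2 plus half the increment of ln link_mass,
  which telescopes.\<close>

lemma sum_integral_links_ge:
  "k < n \<Longrightarrow> real k * ln 2 + (ln (link_mass k) - ln (link_mass 0)) / 2
    \<le> (\<Sum>j=1..k. LINT t:link j|lborel. kernel t)"
proof (induction k)
  case (Suc k)
  have "ln 2 + (ln (link_mass (Suc k)) - ln (link_mass k)) / 2
      \<le> ln ((link_mass k + link_mass (Suc k)) / link_mass k)"
    using link_mass_pos[of k] link_mass_pos[of "Suc k"] Suc.prems
    by (intro ln_two_add_half_ln_ratio_le) auto
  also have "\<dots> \<le> (LINT t:link (Suc k)|lborel. kernel t)"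
    by (rule ln_le_integral_link) fact
  finally show ?case using Suc by (simp add: algebra_simps add_divide_distrib diff_divide_distrib)
qed simp

lemma integral_kernel_ge_sum_links:
  "(\<Sum>j=1..n - 1. LINT t:link j|lborel. kernel t) \<le> (LINT t:kernel_domain|lborel. kernel t)"
proof -
  have "0 \<le> (LINT t:link n|lborel. kernel t)"
    unfolding set_lebesgue_integral_def
  proof (rule integral_nonneg_AE)
    show "AE t in lborel. 0 \<le> indicator (link n) t *\<^sub>R kernel t"
      using g1_nonneg
    proof eventually_elim
      case (elim t)
      have "0 \<le> kernel t" if "t \<in> link n"
        using linkD[OF n_ge_1 order_refl that] w1_sh_pos elim
        by (simp add: kernel_def divide_nonneg_pos)
      then show ?case by (simp split: split_indicator)
    qed
  qed
  moreover have "{1..n} = insert n {1..n - 1}" using n_ge_1 by auto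
  ultimately show ?thesis unfolding integral_kernel_eq_sum_links using n_ge_1 by simp
qed

lemma omg_sqrt_det_le_pt: "m \<le> n \<Longrightarrow> omg sqrt_det {a..<pt m} \<le> real m * sqrt \<delta>"
proof (induction m)
  case (Suc m)
  have "omg sqrt_det {a..<pt (Suc m)} = omg sqrt_det {a..<pt m} + omg sqrt_det {pt m..<pt (Suc m)}"
    using Suc.prems a_le_pt[of m] pt_step[of m] by (intro omg_Ico_split integrable_sqrt_det) auto
  moreover have "omg sqrt_det {pt m..<pt (Suc m)} \<le> sqrt \<delta>"
    using omg_sqrt_det_le[of "{pt m..<pt (Suc m)}"] pt_step[of m] Suc.prems by simp
  ultimately show ?case using Suc by (simp add: distrib_right)
qed simp

lemma omg_sqrt_det_UNIV_le: "omg sqrt_det UNIV \<le> real (n + 1) * sqrt \<delta>"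
proof -
  have "omg sqrt_det UNIV = omg sqrt_det {a..}"
    unfolding omg_def
    by (rule set_integral_eq_off_finite[of "{}"])
      (use vanish_outside in \<open>auto simp: sqrt_det_def split: split_indicator\<close>)
  also have "\<dots> = omg sqrt_det {a..<pt n} + omg sqrt_det {pt n..}"
  proof -
    have "{a..} = {a..<pt n} \<union> {pt n..}" using a_le_pt[of n] by auto
    moreover have "{a..<pt n} \<inter> {pt n..} = {}" by auto
    ultimately show ?thesis using omg_Un[OF integrable_sqrt_det, of "{a..<pt n}" "{pt n..}"] by simp
  qed
  also have "\<dots> \<le> real n * sqrt \<delta> + sqrt \<delta>"
  proof -
    have "sqrt (detO {pt n..}) \<le> sqrt \<delta>" using detO_tail_le by simp
    moreover have "omg sqrt_det {pt n..} \<le> sqrt (detO {pt n..})" by (rule omg_sqrt_det_le) simp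
    ultimately show ?thesis using omg_sqrt_det_le_pt[of n] by linarith
  qed
  finally show ?thesis by (simp add: distrib_right)
qed

lemma integral_kernel_ge:
  "omg sqrt_det UNIV * ln 2 / sqrt \<delta> - ln (2 * (w1 UNIV + w2 UNIV) / sqrt \<delta>)
    \<le> (LINT t:kernel_domain|lborel. kernel t)"
proof -
  define m0 ml T where "m0 = link_mass 0" and "ml = link_mass (n - 1)" and "T = w1 UNIV + w2 UNIV"
  define k where "k = real (n - 1) * ln 2"
  have "0 < m0" "0 < ml" using link_mass_pos n_ge_1 by (simp_all add: m0_def ml_def)
  have "m0 \<le> w1 UNIV"
    unfolding m0_def link_mass_def by (rule omg_mono[OF integrable(1) g1_nonneg]) auto
  have "0 < T" using \<open>0 < m0\<close> \<open>m0 \<le> w1 UNIV\<close> w2_UNIV_pos by (simp add: T_def)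
  have "\<delta> \<le> ml * w2 UNIV"
    using detO_le_w1_mult_w2_UNIV[of "{pt (n - 1)..<pt n}"] pt_step[of "n - 1"] n_ge_1
    by (simp add: ml_def link_mass_def)
  then have "ln \<delta> \<le> ln (ml * w2 UNIV)" using delta_pos by simp
  also have "\<dots> = ln ml + ln (w2 UNIV)" using \<open>0 < ml\<close> w2_UNIV_pos by (simp add: ln_mult)
  finally have "ln \<delta> \<le> ln ml + ln (w2 UNIV)" .
  moreover have "ln m0 \<le> ln (w1 UNIV)" using \<open>0 < m0\<close> \<open>m0 \<le> w1 UNIV\<close> by simp
  moreover have "ln (w1 UNIV) + ln (w2 UNIV) \<le> 2 * ln (T / 2)"
    unfolding T_def using \<open>0 < m0\<close> \<open>m0 \<le> w1 UNIV\<close> w2_UNIV_pos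
    by (intro ln_add_ln_le_ln_half_sum) auto
  moreover have "k + (ln ml - ln m0) / 2 \<le> (LINT t:kernel_domain|lborel. kernel t)"
    using sum_integral_links_ge[of "n - 1"] integral_kernel_ge_sum_links n_ge_1
    by (simp add: m0_def ml_def k_def)
  moreover have "omg sqrt_det UNIV * ln 2 / sqrt \<delta> \<le> k + 2 * ln 2"
  proof -
    have "omg sqrt_det UNIV * ln 2 / sqrt \<delta> \<le> real (n + 1) * ln 2"
      using omg_sqrt_det_UNIV_le delta_pos by (simp add: divide_le_eq mult_right_mono)
    also have "\<dots> = k + 2 * ln 2" using n_ge_1 by (simp add: k_def algebra_simps)
    finally show ?thesis .
  qed
  moreover have "ln (2 * T / sqrt \<delta>) = 2 * ln 2 + ln (T / 2) - ln \<delta> / 2"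
    using \<open>0 < T\<close> delta_pos by (simp add: ln_div ln_mult ln_sqrt)
  ultimately show ?thesis unfolding T_def[symmetric] by argo
qed

lemma integral_kernel_bounds:
  assumes "0 < c" "0 < r" "\<delta> = c / r\<^sup>2"
  shows "omg sqrt_det UNIV / sqrt c * ln 2 * r - (ln r + ln (2 * (w1 UNIV + w2 UNIV) / sqrt c))
      \<le> (LINT t:kernel_domain|lborel. kernel t)"
    and "(LINT t:kernel_domain|lborel. kernel t) \<le> 4 * sqrt (detO UNIV) / sqrt c * r"
proof -
  have sqrt_delta: "sqrt \<delta> = sqrt c / r" using assms by (simp add: real_sqrt_divide)
  have "0 < w1 UNIV + w2 UNIV" using w1_nonneg w2_UNIV_pos by (simp add: add_nonneg_pos)
  then have "ln (2 * (w1 UNIV + w2 UNIV) / sqrt \<delta>) = ln r + ln (2 * (w1 UNIV + w2 UNIV) / sqrt c)"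
    using assms(1,2) by (simp add: sqrt_delta ln_div ln_mult)
  then show "omg sqrt_det UNIV / sqrt c * ln 2 * r - (ln r + ln (2 * (w1 UNIV + w2 UNIV) / sqrt c))
      \<le> (LINT t:kernel_domain|lborel. kernel t)"
    using integral_kernel_ge assms(1,2) by (simp add: sqrt_delta)
  show "(LINT t:kernel_domain|lborel. kernel t) \<le> 4 * sqrt (detO UNIV) / sqrt c * r"
    using integral_kernel_le by (simp add: sqrt_delta)
qed

end

section \<open>Cutting off a Hamiltonian outside (a, b)\<close>

definition cutoff :: "real \<Rightarrow> ereal \<Rightarrow> (real \<Rightarrow> real) \<Rightarrow> real \<Rightarrow> real" where
  "cutoff a b h x = indicator (ival a b) x * h x"

lemma omg_cutoff_UNIV: "omg (cutoff a b h) UNIV = omg h (ival a b)"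
  by (simp add: omg_def cutoff_def set_lebesgue_integral_def)

lemma omg_cutoff_Ico:
  assumes "a \<le> s" "ereal t < b"
  shows "omg (cutoff a b h) {s..<t} = omg h {s..t}"
  unfolding omg_def
proof (rule set_integral_eq_off_finite[where X="{a, t}"])
  fix x assume "x \<notin> {a, t}"
  then have "x \<in> {s..<t} \<longleftrightarrow> x \<in> {s..t}" "x \<in> {s..<t} \<Longrightarrow> x \<in> ival a b"
    using assms by (auto simp: ival_def intro: less_trans[of "ereal x" "ereal t"])
  then show "indicator {s..<t} x * cutoff a b h x = indicator {s..t} x * h x"
    by (auto simp: cutoff_def split: split_indicator)
qed simp

lemma trOmega_ival_eq_cutoff:
  "trOmega h1 h2 (ival a b) = omg (cutoff a b h1) UNIV + omg (cutoff a b h2) UNIV"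
  by (simp add: trOmega_def omg_cutoff_UNIV)

lemma detOmega_ival_eq_cutoff:
  "detOmega h1 h2 h3 (ival a b) = detOmega (cutoff a b h1) (cutoff a b h2) (cutoff a b h3) UNIV"
  by (simp add: detOmega_def omg_cutoff_UNIV)

lemma detOmega_cutoff_Ico:
  "a \<le> s \<Longrightarrow> ereal t < b \<Longrightarrow>
    detOmega (cutoff a b h1) (cutoff a b h2) (cutoff a b h3) {s..<t} = detOmega h1 h2 h3 {s..t}"
  by (simp add: detOmega_def omg_cutoff_Ico)

lemma psd_hamiltonian_cutoff:
  assumes "hamiltonian a b h1 h2 h3" "limit_circle a b h1 h2"
  shows "psd_hamiltonian (cutoff a b h1) (cutoff a b h2) (cutoff a b h3)"
proof
  let ?g1 = "cutoff a b h1" and ?g2 = "cutoff a b h2" and ?g3 = "cutoff a b h3"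
  from assms(1) have "\<forall>h\<in>{h1, h2, h3}. set_borel_measurable lborel (ival a b) h"
    and psd_ival: "AE t in lborel. t \<in> ival a b \<longrightarrow> h1 t \<ge> 0 \<and> h2 t \<ge> 0 \<and> h1 t * h2 t - (h3 t)\<^sup>2 \<ge> 0"
    by (simp_all add: hamiltonian_def)
  then have meas: "?g1 \<in> borel_measurable lborel" "?g2 \<in> borel_measurable lborel"
    "?g3 \<in> borel_measurable lborel"
    by (simp_all add: set_borel_measurable_def cutoff_def[abs_def])
  show psd: "AE x in lborel. psd2 (?g1 x) (?g2 x) (?g3 x)"
    using psd_ival by (auto simp: psd2_def cutoff_def indicator_def elim!: eventually_mono)
  have sum: "integrable lborel (\<lambda>x. ?g1 x + ?g2 x)"
    using assms(2) by (simp add: limit_circle_def set_integrable_def cutoff_def distrib_left)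
  have "AE x in lborel. norm (?g1 x) \<le> norm (?g1 x + ?g2 x) \<and> norm (?g2 x) \<le> norm (?g1 x + ?g2 x)
      \<and> norm (?g3 x) \<le> norm (?g1 x + ?g2 x)"
    using psd by (rule eventually_mono) (metis psd2_abs_le_trace abs_ge_self order_trans real_norm_def)
  then have b1: "AE x in lborel. norm (?g1 x) \<le> norm (?g1 x + ?g2 x)"
    and b2: "AE x in lborel. norm (?g2 x) \<le> norm (?g1 x + ?g2 x)"
    and b3: "AE x in lborel. norm (?g3 x) \<le> norm (?g1 x + ?g2 x)"
    by (auto elim: eventually_mono)
  show "integrable lborel ?g1" by (rule Bochner_Integration.integrable_bound[OF sum meas(1) b1])
  show "integrable lborel ?g2" by (rule Bochner_Integration.integrable_bound[OF sum meas(2) b2])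
  show "integrable lborel ?g3" by (rule Bochner_Integration.integrable_bound[OF sum meas(3) b3])
qed

lemma omg_sqrt_det_cutoff:
  assumes "hamiltonian a b h1 h2 h3" "limit_circle a b h1 h2"
  shows "omg (psd_hamiltonian.sqrt_det (cutoff a b h1) (cutoff a b h2) (cutoff a b h3)) UNIV
    = (LINT t:ival a b|lborel. sqrt (h1 t * h2 t - (h3 t)\<^sup>2))"
proof -
  have "psd_hamiltonian.sqrt_det (cutoff a b h1) (cutoff a b h2) (cutoff a b h3)
      = cutoff a b (\<lambda>t. sqrt (h1 t * h2 t - (h3 t)\<^sup>2))"
    unfolding fun_eq_iff psd_hamiltonian.sqrt_det_def[OF psd_hamiltonian_cutoff[OF assms]]
    by (simp add: cutoff_def split: split_indicator)
  then show ?thesis by (simp add: omg_cutoff_UNIV) (simp add: omg_def)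
qed

lemma detOmega_ival_nonneg:
  assumes "hamiltonian a b h1 h2 h3" "limit_circle a b h1 h2"
  shows "0 \<le> detOmega h1 h2 h3 (ival a b)"
proof -
  interpret psd_hamiltonian "cutoff a b h1" "cutoff a b h2" "cutoff a b h3"
    using psd_hamiltonian_cutoff[OF assms] .
  show ?thesis using detO_nonneg[of UNIV] by (simp add: detOmega_ival_eq_cutoff)
qed

lemma hamiltonian_trace_pos:
  assumes "hamiltonian a b h1 h2 h3"
  shows "AE x in lborel. x \<in> ival a b \<longrightarrow> 0 < h1 x + h2 x"
proof -
  have pos: "0 < h1 x + h2 x"
    if "0 \<le> h1 x" "0 \<le> h2 x" "h1 x * h2 x - (h3 x)\<^sup>2 \<ge> 0" "\<not> (h1 x = 0 \<and> h2 x = 0 \<and> h3 x = 0)" for x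
  proof (rule ccontr)
    assume "\<not> 0 < h1 x + h2 x"
    then have "h1 x = 0" "h2 x = 0" using that by auto
    then show False using that by simp
  qed
  from assms have "AE x in lborel. x \<in> ival a b \<longrightarrow> 0 \<le> h1 x \<and> 0 \<le> h2 x \<and> h1 x * h2 x - (h3 x)\<^sup>2 \<ge> 0"
    "AE x in lborel. x \<in> ival a b \<longrightarrow> \<not> (h1 x = 0 \<and> h2 x = 0 \<and> h3 x = 0)"
    by (simp_all add: hamiltonian_def)
  then show ?thesis by eventually_elim (use pos in blast)
qed

lemma compatible_pair_cutoff:
  assumes "hamiltonian a b h1 h2 h3" "limit_circle a b h1 h2" "0 < c"
    and "r0 = sqrt (c / detOmega h1 h2 h3 (ival a b))" "r0 < r"
    and "a < that r \<and> ereal (that r) < b \<and> detOmega h1 h2 h3 {a..that r} = c / r\<^sup>2"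
    and "\<And>t. that r \<le> t \<Longrightarrow> ereal t < b \<Longrightarrow>
        a \<le> shat t r \<and> shat t r \<le> t \<and> detOmega h1 h2 h3 {shat t r..t} = c / r\<^sup>2"
  shows "compatible_pair (cutoff a b h1) (cutoff a b h2) (cutoff a b h3) a b (c / r\<^sup>2) (that r) (\<lambda>t. shat t r)"
proof (rule compatible_pair.intro[OF psd_hamiltonian_cutoff[OF assms(1,2)]])
  have "ereal a < b" using assms(1) by (simp add: hamiltonian_def)
  have "0 \<le> r0" using assms(3,4) detOmega_ival_nonneg[OF assms(1,2)] by simp
  then have "0 < c / r\<^sup>2" using assms(3,5) by simp
  then show "compatible_pair_axioms (cutoff a b h1) (cutoff a b h2) (cutoff a b h3) a b (c / r\<^sup>2)
      (that r) (\<lambda>t. shat t r)"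
    using assms(6,7) hamiltonian_trace_pos[OF assms(1)] detOmega_cutoff_Ico
      \<open>ereal a < b\<close>
    unfolding compatible_pair_axioms_def
    by (auto simp: cutoff_def ival_def elim!: eventually_mono)
qed

lemma kernelH_eq_cutoff:
  assumes "a < that r" "that r \<le> t" "ereal t < b" "a \<le> shat t r"
  shows "kernelH a b h1 h2 h3 c that shat t r = cutoff a b h1 t / omg (cutoff a b h1) {shat t r..<t}"
  using assms by (simp add: kernelH_def omg_cutoff_Ico cutoff_def ival_def)

theorem proposition5p11:
  fixes a :: real and b :: ereal and h1 h2 h3 :: "real \<Rightarrow> real"
    and c r0 :: real and that :: "real \<Rightarrow> real" and shat :: "real \<Rightarrow> real \<Rightarrow> real"
  assumes ham: "hamiltonian a b h1 h2 h3"
    and lc: "limit_circle a b h1 h2"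
    and def: "definite a b h1 h2 h3"
    and cpos: "c > 0"
    and r0_def: "r0 = sqrt (c / detOmega h1 h2 h3 (ival a b))"
    and that_prop: "\<And>r. r > r0 \<Longrightarrow>
        a < that r \<and> ereal (that r) < b \<and> detOmega h1 h2 h3 {a..that r} = c / r\<^sup>2"
    and shat_prop: "\<And>r t. r > r0 \<Longrightarrow> that r \<le> t \<Longrightarrow> ereal t < b \<Longrightarrow>
        a \<le> shat t r \<and> shat t r \<le> t \<and> detOmega h1 h2 h3 {shat t r..t} = c / r\<^sup>2"
  shows "\<And>r. r > r0 \<Longrightarrow>
      set_integrable lborel {t. that r \<le> t \<and> ereal t < b}
        (\<lambda>t. kernelH a b h1 h2 h3 c that shat t r) \<and>
      (LINT t:ival a b|lborel. sqrt (h1 t * h2 t - (h3 t)\<^sup>2)) / sqrt c * ln 2 * r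
        - (ln r + ln (2 * trOmega h1 h2 (ival a b) / sqrt c))
      \<le> (LINT t:{t. that r \<le> t \<and> ereal t < b}|lborel. kernelH a b h1 h2 h3 c that shat t r) \<and>
      (LINT t:{t. that r \<le> t \<and> ereal t < b}|lborel. kernelH a b h1 h2 h3 c that shat t r)
      \<le> 4 * sqrt (detOmega h1 h2 h3 (ival a b)) / sqrt c * r"
proof -
  fix r assume "r > r0"
  interpret compatible_pair "cutoff a b h1" "cutoff a b h2" "cutoff a b h3" a b "c / r\<^sup>2" "that r"
    "\<lambda>t. shat t r"
    by (rule compatible_pair_cutoff[OF ham lc cpos r0_def \<open>r > r0\<close>])
      (use that_prop shat_prop \<open>r > r0\<close> in auto)
  have "0 \<le> r0" unfolding r0_def using detOmega_ival_nonneg[OF ham lc] cpos by simp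
  have kernel: "kernelH a b h1 h2 h3 c that shat t r = kernel t" if "t \<in> kernel_domain" for t
    using that th sh[of t] by (auto simp: kernel_domain_def kernel_def intro!: kernelH_eq_cutoff)
  then have "(LINT t:kernel_domain|lborel. kernelH a b h1 h2 h3 c that shat t r) = (LINT t:kernel_domain|lborel. kernel t)"
    by (intro set_lebesgue_integral_cong) auto
  moreover have "set_integrable lborel kernel_domain (\<lambda>t. kernelH a b h1 h2 h3 c that shat t r)"
    using kernel_integrable kernel by (subst set_integrable_cong) auto
  ultimately show "set_integrable lborel {t. that r \<le> t \<and> ereal t < b}
        (\<lambda>t. kernelH a b h1 h2 h3 c that shat t r) \<and>
      (LINT t:ival a b|lborel. sqrt (h1 t * h2 t - (h3 t)\<^sup>2)) / sqrt c * ln 2 * r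
        - (ln r + ln (2 * trOmega h1 h2 (ival a b) / sqrt c))
      \<le> (LINT t:{t. that r \<le> t \<and> ereal t < b}|lborel. kernelH a b h1 h2 h3 c that shat t r) \<and>
      (LINT t:{t. that r \<le> t \<and> ereal t < b}|lborel. kernelH a b h1 h2 h3 c that shat t r)
      \<le> 4 * sqrt (detOmega h1 h2 h3 (ival a b)) / sqrt c * r"
    using integral_kernel_bounds[OF cpos _ refl] \<open>r > r0\<close> \<open>0 \<le> r0\<close>
    by (simp add: kernel_domain_def[symmetric] omg_sqrt_det_cutoff[OF ham lc] trOmega_ival_eq_cutoff
        detOmega_ival_eq_cutoff)
qed

end
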